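(* Assume $0<\alpha<1$ and $E\in\mathrm{Swath}(\alpha)$. Let $X_E=X_E(\alpha)$ and $S_E=S_E(\alpha)$. The quadratic polynomial $t\mapsto\mathrm{tr}\big(((E+tX_E)S_E)^2\big)$ is strictly convex and its minimizer $t_E=t_E(\alpha)$ satisfies $\delta:=t_E-\tfrac12\alpha/\|X_E\|_E>0$. Moreover, \[ t_E-\delta\le t\le t_E+\delta\ \Rightarrow\ E(t)\in\mathrm{Swath}(\beta)\ \text{and}\ S_E\in\mathrm{int}\big(K_{E(t)}(\beta)^*\big), \] where $E(t):=\frac{1}{1+t}(E+tX_E)$ and $\beta=\alpha\sqrt{\tfrac{1+\alpha}{2}}$.
   Context: $\mathbb{S}^n$ is the space of real symmetric $n\times n$ matrices, $\mathbb{S}^n_{++}$ the positive definite matrices. Given $C,A_1,\ldots,A_m\in\mathbb{S}^n$, $b\in\mathbb{R}^m$, let $\mathcal{A}(X)=(\mathrm{tr}(A_iX))_i$ and $\mathcal{A}^*y=\sum_iy_iA_i$. Standing assumptions: the SDP $\min\mathrm{tr}(CX)$ s.t. $\mathcal{A}(X)=b$, $X\succeq0$ and its dual $\max b^Ty$ s.t. $\mathcal{A}^*y+S=C$, $S\succeq0$ are strictly feasible; $b\ne0$; $C$ is not a linear combination of the $A_i$; the $A_i$ are linearly independent. For $E\in\mathbb{S}^n_{++}$: $\|X\|_E=\mathrm{tr}((E^{-1}X)^2)^{1/2}$; $K_E(\gamma)=\{X:\mathrm{tr}(E^{-1}X)\ge\gamma\|X\|_E\}$; $K_E(\gamma)^*$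 its dual cone w.r.t. the trace inner product. $\mathrm{QP}_E(\gamma)$: $\min\mathrm{tr}(CX)$ s.t. $\mathcal{A}(X)=b$, $X\in K_E(\gamma)$; dual $\mathrm{QP}_E(\gamma)^*$: $\max b^Ty$ s.t. $\mathcal{A}^*y+S=C$, $S\in K_E(\gamma)^*$. $\mathrm{Swath}(\gamma)=\{E\in\mathbb{S}^n_{++}:\mathcal{A}(E)=b,\ \mathrm{QP}_E(\gamma)\text{ has an optimal solution}\}$. For $E\in\mathrm{Swath}(\alpha)$, $X_E(\alpha)$ is the optimal solution of $\mathrm{QP}_E(\alpha)$ and $(y_E(\alpha),S_E(\alpha))$ the optimal solution of $\mathrm{QP}_E(\alpha)^*$. *)

theory Defs
  imports "HOL-Analysis.Analysis"
begin

text \<open>Real symmetric n x n matrices are modelled as elements of real^'n^'n with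
  transpose X = X; the index type 'n (finite) is the dimension n.\<close>

definition symm :: "real^'n^'n \<Rightarrow> bool" where
  "symm X \<longleftrightarrow> transpose X = X"

definition posdef :: "real^'n^'n \<Rightarrow> bool" where
  "posdef X \<longleftrightarrow> symm X \<and> (\<forall>v. v \<noteq> 0 \<longrightarrow> v \<bullet> (X *v v) > 0)"

definition psd :: "real^'n^'n \<Rightarrow> bool" where
  "psd X \<longleftrightarrow> symm X \<and> (\<forall>v. v \<bullet> (X *v v) \<ge> 0)"

definition opA :: "('m \<Rightarrow> real^'n^'n) \<Rightarrow> real^'n^'n \<Rightarrow> real^'m" where
  "opA A X = (\<chi> i. trace (A i ** X))"

definition opAadj :: "('m::finite \<Rightarrow> real^'n^'n) \<Rightarrow> real^'m \<Rightarrow> real^'n^'n" where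
  "opAadj A y = (\<Sum>i\<in>UNIV. (y $ i) *\<^sub>R A i)"

definition normE :: "real^'n^'n \<Rightarrow> real^'n^'n \<Rightarrow> real" where
  "normE E X = sqrt (trace ((matrix_inv E ** X) ** (matrix_inv E ** X)))"

definition KE :: "real^'n^'n \<Rightarrow> real \<Rightarrow> (real^'n^'n) set" where
  "KE E \<gamma> = {X. symm X \<and> trace (matrix_inv E ** X) \<ge> \<gamma> * normE E X}"

definition dual_cone :: "(real^'n^'n) set \<Rightarrow> (real^'n^'n) set" where
  "dual_cone K = {S. symm S \<and> (\<forall>X\<in>K. trace (S ** X) \<ge> 0)}"

definition int_sym :: "(real^'n^'n) set \<Rightarrow> (real^'n^'n) set" where
  "int_sym K = {S\<in>K. \<exists>e>0. \<forall>T. symm T \<and> norm (T - S) < e \<longrightarrow> T \<in> K}"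

definition QP_opt :: "('m \<Rightarrow> real^'n^'n) \<Rightarrow> real^'m \<Rightarrow> real^'n^'n \<Rightarrow> real^'n^'n \<Rightarrow> real
    \<Rightarrow> real^'n^'n \<Rightarrow> bool" where
  "QP_opt A b C E \<gamma> X \<longleftrightarrow> opA A X = b \<and> X \<in> KE E \<gamma> \<and>
     (\<forall>X'. opA A X' = b \<and> X' \<in> KE E \<gamma> \<longrightarrow> trace (C ** X) \<le> trace (C ** X'))"

definition QPdual_opt :: "('m::finite \<Rightarrow> real^'n^'n) \<Rightarrow> real^'m \<Rightarrow> real^'n^'n \<Rightarrow> real^'n^'n \<Rightarrow> real
    \<Rightarrow> real^'m \<Rightarrow> real^'n^'n \<Rightarrow> bool" where
  "QPdual_opt A b C E \<gamma> y S \<longleftrightarrow> opAadj A y + S = C \<and> S \<in> dual_cone (KE E \<gamma>) \<and>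
     (\<forall>y' S'. opAadj A y' + S' = C \<and> S' \<in> dual_cone (KE E \<gamma>) \<longrightarrow> b \<bullet> y' \<le> b \<bullet> y)"

definition Swath :: "('m \<Rightarrow> real^'n^'n) \<Rightarrow> real^'m \<Rightarrow> real^'n^'n \<Rightarrow> real \<Rightarrow> (real^'n^'n) set" where
  "Swath A b C \<gamma> = {E. posdef E \<and> opA A E = b \<and> (\<exists>X. QP_opt A b C E \<gamma> X)}"

definition strict_convex_on :: "real set \<Rightarrow> (real \<Rightarrow> real) \<Rightarrow> bool" where
  "strict_convex_on S f \<longleftrightarrow> convex S \<and>
    (\<forall>x\<in>S. \<forall>y\<in>S. x \<noteq> y \<longrightarrow> (\<forall>u>0. \<forall>v>0. u + v = 1 \<longrightarrow>
       f (u * x + v * y) < u * f x + v * f y))"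

end

theory Submission
  imports Defs
begin

text \<open>Whitening by a factor \<open>L\<close> with \<open>E\<^sup>-\<^sup>1 = L L\<^sup>T\<close> turns \<open>E\<close> into \<open>I\<close>, \<open>\<parallel>\<cdot>\<parallel>\<^sub>E\<close> into the
  Frobenius norm and \<open>K\<^sub>E(\<alpha>)\<close> into a circular cone around \<open>I\<close>. The optimality conditions of
  \<open>QP\<^sub>E(\<alpha>)\<close> put the whitened \<open>X\<^sub>E\<close> on the boundary of that cone and make the whitened
  \<open>S\<^sub>E\<close> a positive multiple of \<open>I - \<alpha> U\<close>, where \<open>U\<close> is the normalised whitened \<open>X\<^sub>E\<close>.
  Hence \<open>(E + t X\<^sub>E) S\<^sub>E\<close> is, after whitening, \<open>\<mu> (I + s U)(I - \<alpha> U)\<close> with \<open>s = t \<parallel>X\<^sub>E\<parallel>\<^sub>E\<close>: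
  its trace does not depend on \<open>t\<close>, and its squared norm is a strictly convex quadratic in
  \<open>s\<close> whose coefficients involve \<open>U\<close> only through \<open>tr U\<^sup>3\<close> and \<open>tr U\<^sup>4\<close>. Close to the
  minimiser this product is so close to a multiple of \<open>I\<close> that \<open>E(t)\<close> is positive definite
  and \<open>S\<^sub>E\<close> lies in the interior of the dual of \<open>K\<^sub>E\<^sub>(\<^sub>t\<^sub>)(\<beta>)\<close>, which in turn makes
  \<open>QP\<^sub>E\<^sub>(\<^sub>t\<^sub>)(\<beta>)\<close> solvable by coercivity.\<close>

section \<open>Symmetric matrices and the trace inner product\<close>

lemma matrix_add_rdistrib: "(B + C) ** A = B ** A + C ** A"
  by (vector matrix_matrix_mult_def sum.distrib[symmetric] field_simps)

lemma matrix_diff_ldistrib: "A ** (B - C) = A ** B - A ** (C::real^'n^'m)"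
  by (vector matrix_matrix_mult_def sum_subtractf[symmetric] field_simps)

lemma matrix_diff_rdistrib: "(B - C) ** A = B ** A - C ** (A::real^'n^'m)"
  by (vector matrix_matrix_mult_def sum_subtractf[symmetric] field_simps)

lemma trace_scaleR: "trace (c *\<^sub>R (A::real^'n^'n)) = c * trace A"
  by (simp add: trace_def sum_distrib_left)

lemma trace_zero [simp]: "trace (0::real^'n^'n) = 0"
  by (simp add: trace_def)

lemma trace_scaleR_mult: "trace ((c *\<^sub>R A) ** B) = c * trace (A ** (B::real^'n^'n))"
  by (simp add: scalar_matrix_assoc[symmetric] trace_scaleR)

lemma trace_mult_add_scaleR:
  "trace (M ** (X + c *\<^sub>R D)) = trace (M ** X) + c * trace (M ** (D::real^'n^'n))"
  by (simp add: matrix_add_ldistrib matrix_scalar_ac trace_add trace_scaleR_mult)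

lemma trace_sum_mult: "trace ((\<Sum>i\<in>I. f i) ** (X::real^'n^'n)) = (\<Sum>i\<in>I. trace (f i ** X))"
  by (induction I rule: infinite_finite_induct) (simp_all add: matrix_add_rdistrib trace_add)

lemma linear_trace: "linear (trace :: real^'n^'n \<Rightarrow> real)"
  by (rule linearI) (simp_all add: trace_add trace_scaleR)

lemma linear_trace_mult: "linear (\<lambda>D. trace (M ** (D::real^'n^'n)))"
  by (rule linearI) (simp_all add: matrix_add_ldistrib matrix_scalar_ac trace_add trace_scaleR_mult)

lemma symm_nth: "symm V \<Longrightarrow> V $ k $ i = V $ i $ k"
  unfolding symm_def by (metis transpose_def vec_lambda_beta)

lemma trace_mult_symm_eq_inner: "symm V \<Longrightarrow> trace (U ** V) = U \<bullet> V"
  by (simp add: trace_def matrix_matrix_mult_def inner_vec_def symm_nth)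

lemma trace_eq_inner_mat_1: "trace (U::real^'n^'n) = U \<bullet> mat 1"
  by (simp add: trace_def inner_vec_def mat_def if_distrib cong: if_cong)

lemma inner_mat_1_left: "mat 1 \<bullet> U = trace (U::real^'n^'n)"
  by (simp add: trace_eq_inner_mat_1 inner_commute)

lemma inner_mat_1_self: "(mat 1::real^'n^'n) \<bullet> mat 1 = real CARD('n)"
  using trace_eq_inner_mat_1[of "mat 1 :: real^'n^'n"] by (simp add: trace_I)

lemma symm_add [simp]: "symm A \<Longrightarrow> symm B \<Longrightarrow> symm (A + B)"
  by (simp add: symm_def transpose_def vec_eq_iff)

lemma symm_diff [simp]: "symm A \<Longrightarrow> symm B \<Longrightarrow> symm (A - B)"
  by (simp add: symm_def transpose_def vec_eq_iff)

lemma symm_scaleR [simp]: "symm A \<Longrightarrow> symm (c *\<^sub>R A)"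
  by (simp add: symm_def transpose_scalar)

lemma symm_uminus [simp]: "symm A \<Longrightarrow> symm (- A)"
  by (simp add: symm_def transpose_def vec_eq_iff)

lemma symm_zero [simp]: "symm 0"
  by (simp add: symm_def transpose_def vec_eq_iff)

lemma symm_mat_1 [simp]: "symm (mat 1)"
  by (simp add: symm_def)

lemma symm_square: "symm Y \<Longrightarrow> symm (Y ** Y)"
  by (simp add: symm_def matrix_transpose_mul)

lemma symm_congruence: "symm Y \<Longrightarrow> symm (transpose L ** Y ** L)"
  by (simp add: symm_def matrix_transpose_mul matrix_mul_assoc)

lemma symm_congruence_transpose: "symm Y \<Longrightarrow> symm (L ** Y ** transpose L)"
  by (simp add: symm_def matrix_transpose_mul matrix_mul_assoc)

lemma symm_inner_commute: "symm P \<Longrightarrow> x \<bullet> (P *v y) = y \<bullet> (P *v (x::real^'n))"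
  by (metis symm_def transpose_matrix_vector dot_lmul_matrix inner_commute)

lemma matrix_vector_mult_norm_le: "norm (A *v (w::real^'n)) \<le> norm (A::real^'n^'m) * norm w"
proof -
  have "(A *v w) \<bullet> (A *v w) = (\<Sum>i\<in>UNIV. (A$i \<bullet> w)^2)"
    by (simp add: inner_vec_def matrix_vector_mul_component power2_eq_square)
  also have "\<dots> \<le> (\<Sum>i\<in>UNIV. (A$i \<bullet> A$i) * (w \<bullet> w))"
    by (intro sum_mono Cauchy_Schwarz_ineq)
  also have "\<dots> = (A \<bullet> A) * (w \<bullet> w)"
    by (simp add: inner_vec_def[of A] sum_distrib_right)
  finally have "norm (A *v w)^2 \<le> (norm A * norm w)^2"
    by (simp add: power2_norm_eq_inner power_mult_distrib)
  thus ?thesis by (simp add: abs_le_square_iff)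
qed

lemma matrix_mult_norm_le: "norm ((A::real^'k^'m) ** (B::real^'n^'k)) \<le> norm A * norm B"
proof -
  have rows: "(A ** B) $ i = transpose B *v (A $ i)" for i
    by (simp add: matrix_matrix_mult_def matrix_vector_mult_def transpose_def vec_eq_iff mult.commute)
  have norm_transpose: "norm (transpose B) = norm B"
    by (simp add: norm_eq_sqrt_inner inner_vec_def transpose_def) (subst sum.swap, rule refl)
  have "norm (A ** B)^2 = (\<Sum>i\<in>UNIV. norm (transpose B *v A$i)^2)"
    by (simp add: power2_norm_eq_inner inner_vec_def[of "A ** B"] rows)
  also have "\<dots> \<le> (\<Sum>i\<in>UNIV. (norm B * norm (A$i))^2)"
    by (intro sum_mono power_mono)
      (metis norm_transpose matrix_vector_mult_norm_le mult.commute, simp)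
  also have "\<dots> = (norm A * norm B)^2"
    by (simp add: power2_norm_eq_inner power_mult_distrib inner_vec_def[of A] sum_distrib_left mult.commute)
  finally show ?thesis by (simp add: abs_le_square_iff)
qed

definition outer_prod :: "real^'n \<Rightarrow> real^'n^'n" where
  "outer_prod v = (\<chi> i k. v$i * v$k)"

lemma symm_outer_prod [simp]: "symm (outer_prod v)"
  by (simp add: symm_def outer_prod_def transpose_def vec_eq_iff mult.commute)

lemma inner_matrix_vector_outer_prod: "w \<bullet> (Z *v w) = Z \<bullet> outer_prod w"
  by (simp add: inner_vec_def matrix_vector_mult_def outer_prod_def sum_distrib_left mult_ac)

lemma inner_outer_prod_self: "outer_prod w \<bullet> outer_prod w = (w \<bullet> w)^2"
  by (simp add: inner_vec_def outer_prod_def power2_eq_square sum_distrib_left sum_distrib_right mult_ac)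

lemma inner_outer_prod_mat_1: "outer_prod w \<bullet> mat 1 = w \<bullet> w"
  by (simp add: inner_vec_def outer_prod_def mat_def if_distrib cong: if_cong)

lemma quadratic_form_outer_prod: "x \<bullet> (outer_prod v *v x) = (v \<bullet> x)^2"
  by (simp add: inner_vec_def matrix_vector_mult_def outer_prod_def power2_eq_square
      sum_distrib_left sum_distrib_right mult_ac)

lemma quadratic_nonneg_discriminant:
  fixes a b c :: real
  assumes "\<And>t. 0 \<le> a + 2*b*t + c*t^2" "0 \<le> c"
  shows "b^2 \<le> a*c"
proof (cases "c = 0")
  case True
  show ?thesis
  proof (cases "b = 0")
    case False
    have "0 \<le> a + 2*b*(-(a+1)/(2*b)) + c*(-(a+1)/(2*b))^2" by (rule assms(1))
    with False True show ?thesis by (simp add: field_simps)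
  qed (simp add: True)
next
  case False
  hence c: "c > 0" using assms(2) by simp
  have "0 \<le> a + 2*b*(-b/c) + c*(-b/c)^2" by (rule assms(1))
  hence "0 \<le> (a*c - b^2)/c" using c by (simp add: field_simps power2_eq_square)
  thus ?thesis using c by (simp add: zero_le_divide_iff)
qed

lemma psd_Cauchy_Schwarz:
  assumes "psd P"
  shows "(x \<bullet> (P *v y))^2 \<le> (x \<bullet> (P *v x)) * (y \<bullet> (P *v (y::real^'n)))"
proof -
  have s: "symm P" and q: "\<And>v. v \<bullet> (P *v v) \<ge> 0" using assms by (auto simp: psd_def)
  have expand: "(x + t *\<^sub>R y) \<bullet> (P *v (x + t *\<^sub>R y))
      = x \<bullet> (P *v x) + 2 * (x \<bullet> (P *v y)) * t + (y \<bullet> (P *v y)) * t^2" for t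
    using symm_inner_commute[OF s, of y x]
    by (simp add: matrix_vector_right_distrib matrix_vector_mult_scaleR inner_add_left inner_add_right
        power2_eq_square algebra_simps)
  show ?thesis
  proof (rule quadratic_nonneg_discriminant)
    show "0 \<le> x \<bullet> (P *v x) + 2 * (x \<bullet> (P *v y)) * t + (y \<bullet> (P *v y)) * t^2" for t
      using q[of "x + t *\<^sub>R y"] expand by simp
  qed (rule q)
qed

lemma posdef_imp_psd: "posdef E \<Longrightarrow> psd E"
  unfolding posdef_def psd_def by (metis inner_zero_left matrix_vector_mult_0_right order.refl order_less_imp_le)

lemma posdef_scaleR: "c > 0 \<Longrightarrow> posdef F \<Longrightarrow> posdef (c *\<^sub>R F)"
  unfolding posdef_def by (simp add: scaleR_matrix_vector_assoc[symmetric])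

lemma posdef_matrix_inv:
  assumes "posdef E"
  shows "E ** matrix_inv E = mat 1" "matrix_inv E ** E = mat 1"
proof -
  have "inj ((*v) E)"
    using assms unfolding posdef_def vec.inj_iff_eq_0 by (metis inner_zero_right less_irrefl)
  then obtain B where "B ** E = mat 1" using matrix_left_invertible_injective by blast
  hence "\<exists>B. E ** B = mat 1 \<and> B ** E = mat 1" using matrix_left_right_inverse by blast
  hence "E ** matrix_inv E = mat 1 \<and> matrix_inv E ** E = mat 1"
    unfolding matrix_inv_def by (rule someI_ex)
  thus "E ** matrix_inv E = mat 1" "matrix_inv E ** E = mat 1" by auto
qed

lemma psd_matrix_inv:
  assumes "posdef E"
  shows "psd (matrix_inv E)"
proof -
  let ?P = "matrix_inv E"
  have EP: "E ** ?P = mat 1" and PE: "?P ** E = mat 1" using posdef_matrix_inv[OF assms] by auto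
  have sE: "transpose E = E" using assms by (simp add: posdef_def symm_def)
  have "E ** transpose ?P = mat 1"
    using arg_cong[OF PE, of transpose] by (simp add: matrix_transpose_mul sE)
  hence "?P ** (E ** transpose ?P) = ?P" by simp
  hence sP: "transpose ?P = ?P" by (simp add: matrix_mul_assoc PE)
  have "v \<bullet> (?P *v v) \<ge> 0" for v
  proof -
    have "v \<bullet> (?P *v v) = (?P *v v) \<bullet> (E *v (?P *v v))"
      by (simp add: matrix_vector_mul_assoc EP inner_commute)
    thus ?thesis using posdef_imp_psd[OF assms] by (simp add: psd_def)
  qed
  thus ?thesis using sP by (simp add: psd_def symm_def)
qed

lemma inner_axis_matrix_vector_axis: "axis k 1 \<bullet> (P *v axis j (1::real)) = P $ k $ j"
  by (simp add: inner_vec_def matrix_vector_mult_def axis_def if_distrib if_distribR cong: if_cong)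

lemma psd_zero_diagonal_row:
  assumes "psd P" "P $ j $ j = 0"
  shows "P $ j = 0"
proof -
  have "P $ k $ j = 0" for k
  proof -
    have "(P $ k $ j)^2 \<le> P $ k $ k * P $ j $ j"
      using psd_Cauchy_Schwarz[OF assms(1), of "axis k 1" "axis j 1"] by (simp only: inner_axis_matrix_vector_axis)
    thus ?thesis using assms(2) by simp
  qed
  thus ?thesis using assms(1) by (simp add: vec_eq_iff psd_def symm_nth)
qed

text \<open>One step of symmetric Gaussian elimination; iterating it yields the factorisation
  \<open>P = L L\<^sup>T\<close> below.\<close>

lemma psd_eliminate_column:
  assumes psd: "psd P" and pos: "P $ j $ j > 0"
  defines "v \<equiv> \<chi> i. P $ i $ j / sqrt (P $ j $ j)"
  shows "psd (P - outer_prod v)" "(P - outer_prod v) $ j = 0"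
    "\<And>i. P $ i = 0 \<Longrightarrow> (P - outer_prod v) $ i = 0"
proof -
  have sP: "symm P" using psd by (simp add: psd_def)
  have vx: "(v \<bullet> x)^2 = (x \<bullet> (P *v axis j 1))^2 / P $ j $ j" for x
  proof -
    have "x \<bullet> (P *v axis j 1) = (\<Sum>i\<in>UNIV. x $ i * P $ i $ j)"
      by (simp add: inner_vec_def matrix_vector_mult_def axis_def if_distrib if_distribR cong: if_cong)
    hence "v \<bullet> x = (x \<bullet> (P *v axis j 1)) / sqrt (P $ j $ j)"
      by (simp add: v_def inner_vec_def sum_divide_distrib mult.commute)
    thus ?thesis using pos by (simp add: power_divide)
  qed
  show "psd (P - outer_prod v)"
    unfolding psd_def
  proof (intro conjI allI)
    show "symm (P - outer_prod v)" using sP by simp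
    fix x
    have "(x \<bullet> (P *v axis j 1))^2 \<le> (x \<bullet> (P *v x)) * P $ j $ j"
      using psd_Cauchy_Schwarz[OF psd, of x "axis j 1"] by (simp add: inner_axis_matrix_vector_axis)
    hence "(v \<bullet> x)^2 \<le> x \<bullet> (P *v x)" using pos by (simp add: vx divide_le_eq)
    thus "0 \<le> x \<bullet> ((P - outer_prod v) *v x)"
      by (simp add: matrix_vector_mult_diff_rdistrib inner_diff_right quadratic_form_outer_prod)
  qed
  have "outer_prod v $ j $ k = P $ j $ k" for k
    using pos symm_nth[OF sP, of j k] by (simp add: v_def outer_prod_def)
  thus "(P - outer_prod v) $ j = 0"
    by (simp add: vec_eq_iff)
  show "(P - outer_prod v) $ i = 0" if "P $ i = 0" for i
  proof -
    have "v $ i = 0" using that by (simp add: v_def)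
    hence "outer_prod v $ i = 0" by (simp add: outer_prod_def vec_eq_iff)
    thus ?thesis using that by simp
  qed
qed

lemma psd_sum_outer_prod:
  assumes "finite I" "psd P" "\<And>i. i \<notin> I \<Longrightarrow> P $ i = 0"
  shows "\<exists>V::'n \<Rightarrow> real^'n. P = (\<Sum>j\<in>I. outer_prod (V j))"
  using assms
proof (induction I arbitrary: P rule: finite_induct)
  case empty
  thus ?case by (simp add: vec_eq_iff)
next
  case (insert j I)
  have extend: "\<exists>V. Q + outer_prod v = (\<Sum>i\<in>insert j I. outer_prod (V i))"
    if "Q = (\<Sum>i\<in>I. outer_prod (V i))" for Q v V
  proof -
    have "(\<Sum>i\<in>I. outer_prod ((V(j:=v)) i)) = (\<Sum>i\<in>I. outer_prod (V i))"
      by (rule sum.cong) (use insert.hyps in auto)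
    thus ?thesis using insert.hyps that by (intro exI[of _ "V(j:=v)"]) (simp add: add.commute)
  qed
  show ?case
  proof (cases "P $ j $ j = 0")
    case True
    have "P $ i = 0" if "i \<notin> I" for i
      using insert.prems psd_zero_diagonal_row[OF insert.prems(1) True] that
      by (cases "i = j") auto
    then obtain V where "P = (\<Sum>i\<in>I. outer_prod (V i))" using insert.IH insert.prems(1) by blast
    hence "\<exists>V. P + outer_prod 0 = (\<Sum>i\<in>insert j I. outer_prod (V i))" by (rule extend)
    moreover have "outer_prod 0 = (0::real^'n^'n)" by (simp add: outer_prod_def vec_eq_iff)
    ultimately show ?thesis by simp
  next
    case False
    hence pos: "P $ j $ j > 0"
      using insert.prems(1) inner_axis_matrix_vector_axis[of j P j] by (simp add: psd_def) (metis order_le_less)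
    define v where "v = (\<chi> i. P $ i $ j / sqrt (P $ j $ j))"
    note elim = psd_eliminate_column[OF insert.prems(1) pos, folded v_def]
    have "(P - outer_prod v) $ i = 0" if "i \<notin> I" for i
      using elim(2,3) insert.prems(2) that by (cases "i = j") auto
    then obtain V where "P - outer_prod v = (\<Sum>i\<in>I. outer_prod (V i))"
      using insert.IH elim(1) by blast
    hence "\<exists>V. (P - outer_prod v) + outer_prod v = (\<Sum>i\<in>insert j I. outer_prod (V i))"
      by (rule extend)
    thus ?thesis by simp
  qed
qed

lemma psd_factorization:
  assumes "psd (P::real^'n^'n)"
  obtains L :: "real^'n^'n" where "L ** transpose L = P"
proof -
  obtain V :: "'n \<Rightarrow> real^'n" where V: "P = (\<Sum>j\<in>UNIV. outer_prod (V j))"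
    using psd_sum_outer_prod[OF finite_class.finite_UNIV assms] by blast
  have "(\<chi> i j. V j $ i) ** transpose (\<chi> i j. V j $ i) = P"
    by (simp add: V matrix_matrix_mult_def transpose_def vec_eq_iff sum_component outer_prod_def)
  thus ?thesis by (rule that)
qed

section \<open>Coordinates in which the centre \<open>E\<close> becomes the identity\<close>

text \<open>With \<open>E\<^sup>-\<^sup>1 = L L\<^sup>T\<close>, the primal map \<open>Y \<mapsto> L\<^sup>T Y L\<close> and the dual map
  \<open>S \<mapsto> L\<^sup>T E S E L\<close> send \<open>E\<close> to \<open>I\<close>, the local norm \<open>\<parallel>\<cdot>\<parallel>\<^sub>E\<close> to the Frobenius norm and
  \<open>K\<^sub>E(\<gamma>)\<close> to the circular cone \<open>K\<^sub>I(\<gamma>)\<close>, while preserving the pairing \<open>tr(S Y)\<close>.\<close>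

locale whitening =
  fixes E L :: "real^'n^'n"
  assumes E_symm: "symm E"
    and inv_factor: "matrix_inv E = L ** transpose L"
    and inv_left: "matrix_inv E ** E = mat 1"
begin

lemma factor_mult_E: "L ** transpose L ** E = mat 1"
  using inv_left by (simp add: inv_factor)

lemma E_mult_factor: "E ** L ** transpose L = mat 1"
  using factor_mult_E matrix_left_right_inverse by (metis matrix_mul_assoc)

lemma congruence_E: "transpose L ** E ** L = mat 1"
  using factor_mult_E matrix_left_right_inverse by (metis matrix_mul_assoc)

lemma factor_mult_E': "X ** L ** transpose L ** E = X"
  using factor_mult_E by (metis matrix_mul_assoc matrix_mul_rid)

lemma E_mult_factor': "X ** E ** L ** transpose L = X"
  using E_mult_factor by (metis matrix_mul_assoc matrix_mul_rid)

lemma congruence_E': "X ** transpose L ** E ** L = X"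
  using congruence_E by (metis matrix_mul_assoc matrix_mul_rid)

lemmas cancel = factor_mult_E E_mult_factor congruence_E factor_mult_E' E_mult_factor' congruence_E'

definition whiten :: "real^'n^'n \<Rightarrow> real^'n^'n" where
  "whiten Y = transpose L ** Y ** L"

definition whiten_dual :: "real^'n^'n \<Rightarrow> real^'n^'n" where
  "whiten_dual S = transpose L ** E ** S ** E ** L"

lemma whiten_add: "whiten (Y + Z) = whiten Y + whiten Z"
  by (simp add: whiten_def matrix_add_ldistrib matrix_add_rdistrib)

lemma whiten_scaleR: "whiten (c *\<^sub>R Y) = c *\<^sub>R whiten Y"
  by (simp add: whiten_def matrix_scalar_ac scalar_matrix_assoc)

lemma linear_whiten: "linear whiten"
  by (rule linearI) (simp_all add: whiten_add whiten_scaleR)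

lemma whiten_E: "whiten E = mat 1"
  by (simp add: whiten_def congruence_E)

lemma unwhiten_whiten: "E ** L ** whiten Y ** transpose L ** E = Y"
  by (simp add: whiten_def matrix_mul_assoc cancel)

lemma whiten_dual_add: "whiten_dual (S + T) = whiten_dual S + whiten_dual T"
  by (simp add: whiten_dual_def matrix_add_ldistrib matrix_add_rdistrib)

lemma whiten_dual_scaleR: "whiten_dual (c *\<^sub>R S) = c *\<^sub>R whiten_dual S"
  by (simp add: whiten_dual_def matrix_scalar_ac scalar_matrix_assoc)

lemma linear_whiten_dual: "linear whiten_dual"
  by (rule linearI) (simp_all add: whiten_dual_add whiten_dual_scaleR)

lemma whiten_dual_unwhiten: "whiten_dual (L ** M ** transpose L) = M"
  by (simp add: whiten_dual_def matrix_mul_assoc cancel)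

lemma symm_whiten: "symm Y \<Longrightarrow> symm (whiten Y)"
  by (simp add: whiten_def symm_congruence)

lemma symm_whiten_dual: "symm S \<Longrightarrow> symm (whiten_dual S)"
  using E_symm by (simp add: whiten_dual_def symm_def matrix_transpose_mul matrix_mul_assoc)

lemma trace_congruence: "trace (transpose L ** M ** E ** L) = trace M"
proof -
  have "trace (transpose L ** M ** E ** L) = trace (M ** E ** L ** transpose L)"
    by (subst trace_mul_sym) (simp add: matrix_mul_assoc)
  thus ?thesis by (simp add: cancel)
qed

lemma whiten_mult_whiten_dual: "whiten F ** whiten_dual S = transpose L ** (F ** S) ** E ** L"
  by (simp add: whiten_def whiten_dual_def matrix_mul_assoc cancel)

lemma trace_whiten_mult_whiten_dual: "trace (whiten F ** whiten_dual S) = trace (F ** S)"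
  by (simp add: whiten_mult_whiten_dual trace_congruence)

lemma trace_mult_eq_whiten: "trace (S ** Y) = trace (whiten_dual S ** whiten Y)"
  by (metis trace_mul_sym trace_whiten_mult_whiten_dual)

lemma trace_square_whiten_mult_whiten_dual:
  "trace ((whiten F ** whiten_dual S) ** (whiten F ** whiten_dual S)) = trace ((F ** S) ** (F ** S))"
proof -
  have "(whiten F ** whiten_dual S) ** (whiten F ** whiten_dual S)
      = transpose L ** ((F ** S) ** (F ** S)) ** E ** L"
    by (simp add: whiten_mult_whiten_dual matrix_mul_assoc cancel)
  thus ?thesis by (simp add: trace_congruence)
qed

lemma trace_inv_mult: "trace (matrix_inv E ** Y) = trace (whiten Y)"
  by (simp add: inv_factor whiten_def matrix_mul_assoc[symmetric] trace_mul_sym[of L])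

lemma normE_eq_norm_whiten: "symm Y \<Longrightarrow> normE E Y = norm (whiten Y)"
proof -
  assume "symm Y"
  have "trace ((matrix_inv E ** Y) ** (matrix_inv E ** Y)) = trace (L ** (whiten Y ** transpose L ** Y))"
    by (simp add: inv_factor whiten_def matrix_mul_assoc)
  also have "\<dots> = trace (whiten Y ** whiten Y)"
    by (subst trace_mul_sym) (simp add: whiten_def matrix_mul_assoc)
  finally show ?thesis
    using \<open>symm Y\<close> by (simp add: normE_def trace_mult_symm_eq_inner symm_whiten norm_eq_sqrt_inner)
qed

lemma mem_KE_iff: "Y \<in> KE E \<gamma> \<longleftrightarrow> symm Y \<and> trace (whiten Y) \<ge> \<gamma> * norm (whiten Y)"
  by (simp add: KE_def trace_inv_mult normE_eq_norm_whiten cong: conj_cong)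

lemma trace_unwhiten_mult: "symm D \<Longrightarrow> trace ((L ** M ** transpose L) ** D) = M \<bullet> whiten D"
  by (subst trace_mult_eq_whiten) (simp add: whiten_dual_unwhiten trace_mult_symm_eq_inner symm_whiten)

lemma E_mem_KE:
  assumes "0 \<le> \<gamma>" "\<gamma> \<le> 1"
  shows "E \<in> KE E \<gamma>"
proof -
  define n where "n = real CARD('n)"
  have "n \<ge> 1" by (simp add: n_def)
  hence "sqrt n \<le> sqrt (n * n)" by (intro real_sqrt_le_mono) simp
  hence "sqrt n \<le> n" using \<open>n \<ge> 1\<close> by simp
  moreover have "\<gamma> * sqrt n \<le> sqrt n" using assms \<open>n \<ge> 1\<close> by (intro mult_left_le_one_le) auto
  ultimately have "\<gamma> * sqrt n \<le> n" by linarith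
  hence "\<gamma> * norm (mat 1 :: real^'n^'n) \<le> trace (mat 1 :: real^'n^'n)"
    by (simp add: norm_eq_sqrt_inner inner_mat_1_self trace_I n_def)
  thus ?thesis using E_symm by (simp add: mem_KE_iff whiten_E)
qed

lemma posdef_unwhiten:
  assumes "symm F" "posdef (whiten F)"
  shows "posdef F"
  unfolding posdef_def
proof (intro conjI allI impI)
  fix v :: "real^'n" assume "v \<noteq> 0"
  define w where "w = (transpose L ** E) *v v"
  have vw: "v = L *v w"
    by (simp add: w_def matrix_vector_mul_assoc matrix_mul_assoc cancel)
  hence "w \<noteq> 0" using \<open>v \<noteq> 0\<close> by auto
  hence "0 < w \<bullet> (whiten F *v w)" using assms(2) by (simp add: posdef_def)
  also have "w \<bullet> (whiten F *v w) = (L *v w) \<bullet> (F *v (L *v w))"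
  proof -
    have "whiten F *v w = (F *v (L *v w)) v* L"
      by (simp only: whiten_def matrix_vector_mul_assoc[symmetric] transpose_matrix_vector)
    thus ?thesis by (metis inner_commute dot_lmul_matrix)
  qed
  finally show "0 < v \<bullet> (F *v v)" by (simp only: vw)
qed (rule assms(1))

end

lemma posdef_whitening:
  fixes E :: "real^'n^'n"
  assumes "posdef E"
  obtains L where "whitening E L"
proof -
  obtain L :: "real^'n^'n" where "L ** transpose L = matrix_inv E"
    using psd_factorization psd_matrix_inv[OF assms] by blast
  thus ?thesis using assms posdef_matrix_inv[OF assms]
    by (intro that[of L]) (simp add: whitening_def posdef_def)
qed

section \<open>Geometry of circular cones\<close>

lemma circular_cone_product_bound:
  fixes r y a v n \<beta> :: real
  assumes "n > 0" "r \<ge> 0" "y \<ge> 0" "a^2 \<ge> (n - \<beta>^2) * r" "v^2 \<ge> \<beta>^2 * y"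
  shows "(r - a^2/n) * (y - v^2/n) \<le> (a * v / n)^2"
proof -
  have "r * (v^2/n) + (a^2/n) * y \<ge> r * (\<beta>^2 * y / n) + ((n - \<beta>^2) * r / n) * y"
    using assms by (intro add_mono mult_left_mono mult_right_mono divide_right_mono) auto
  also have "r * (\<beta>^2 * y / n) + ((n - \<beta>^2) * r / n) * y = r * y"
    using assms(1) by (simp add: field_simps)
  finally have "r * (v^2/n) + (a^2/n) * y \<ge> r * y" .
  moreover have "(r - a^2/n) * (y - v^2/n) = (a * v / n)^2 + (r * y - (r * (v^2/n) + (a^2/n) * y))"
    using assms(1) by (simp add: field_simps power2_eq_square)
  ultimately show ?thesis by linarith
qed

text \<open>The circular cones around \<open>w\<close> of complementary apertures are dual to each other.\<close>

lemma circular_cone_dual: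
  fixes a v w :: "'a::real_inner"
  assumes ww: "w \<bullet> w = n" and n: "n > 0" and \<beta>: "0 \<le> \<beta>" "\<beta>^2 \<le> n"
    and a: "a \<bullet> w \<ge> sqrt (n - \<beta>^2) * norm a" and v: "v \<bullet> w \<ge> \<beta> * norm v"
  shows "a \<bullet> v \<ge> 0"
proof -
  define a' where "a' = a - ((a \<bullet> w) / n) *\<^sub>R w"
  define v' where "v' = v - ((v \<bullet> w) / n) *\<^sub>R w"
  have a0: "a \<bullet> w \<ge> 0" using a \<beta> by (meson order_trans mult_nonneg_nonneg norm_ge_zero real_sqrt_ge_zero diff_ge_0_iff_ge)
  have v0: "v \<bullet> w \<ge> 0" using v \<beta> by (meson order_trans mult_nonneg_nonneg norm_ge_zero)
  have split: "a \<bullet> v = (a \<bullet> w) * (v \<bullet> w) / n + a' \<bullet> v'"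
    and a'a': "a' \<bullet> a' = a \<bullet> a - (a \<bullet> w)^2 / n"
    and v'v': "v' \<bullet> v' = v \<bullet> v - (v \<bullet> w)^2 / n"
    using n unfolding a'_def v'_def
    by (simp_all add: inner_diff_left inner_diff_right ww inner_commute field_simps power2_eq_square)
  have "(sqrt (n - \<beta>^2) * norm a)^2 \<le> (a \<bullet> w)^2"
    using a a0 \<beta> by (intro power_mono) auto
  hence "(a \<bullet> w)^2 \<ge> (n - \<beta>^2) * (a \<bullet> a)"
    using \<beta> by (simp add: power_mult_distrib power2_norm_eq_inner)
  moreover have "(\<beta> * norm v)^2 \<le> (v \<bullet> w)^2"
    using v \<beta> by (intro power_mono) auto
  hence "(v \<bullet> w)^2 \<ge> \<beta>^2 * (v \<bullet> v)"
    by (simp add: power_mult_distrib power2_norm_eq_inner)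
  ultimately have "(a' \<bullet> a') * (v' \<bullet> v') \<le> ((a \<bullet> w) * (v \<bullet> w) / n)^2"
    unfolding a'a' v'v' using n by (intro circular_cone_product_bound) auto
  hence "(a' \<bullet> v')^2 \<le> ((a \<bullet> w) * (v \<bullet> w) / n)^2"
    using Cauchy_Schwarz_ineq[of a' v'] by linarith
  hence "\<bar>a' \<bullet> v'\<bar> \<le> \<bar>(a \<bullet> w) * (v \<bullet> w) / n\<bar>"
    by (simp only: abs_le_square_iff)
  hence "\<bar>a' \<bullet> v'\<bar> \<le> (a \<bullet> w) * (v \<bullet> w) / n"
    using a0 v0 n by simp
  thus ?thesis using split by linarith
qed

lemma cone_boundary_feasible_direction:
  fixes X D w :: "'a::real_inner"
  assumes X: "norm X > 0" "X \<bullet> w = \<alpha> * norm X" and \<alpha>: "\<alpha> > 0"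
    and g: "D \<bullet> w - (\<alpha> / norm X) * (X \<bullet> D) > 0"
  shows "\<exists>\<epsilon>>0. (X + \<epsilon> *\<^sub>R D) \<bullet> w \<ge> \<alpha> * norm (X + \<epsilon> *\<^sub>R D)"
proof -
  define \<nu> \<tau> d g where "\<nu> = norm X" and "\<tau> = D \<bullet> w" and "d = D \<bullet> D"
    and "g = D \<bullet> w - (\<alpha> / norm X) * (X \<bullet> D)"
  have \<nu>: "\<nu> > 0" and g0: "g > 0" and d0: "d \<ge> 0" using X g by (simp_all add: \<nu>_def g_def d_def)
  define \<epsilon> where "\<epsilon> = min (\<alpha> * \<nu> / (\<bar>\<tau>\<bar> + 1)) (2 * \<nu> * g / (\<alpha> * d + 1))"
  have ad: "\<alpha> * d + 1 > 0" using \<alpha> d0 by (simp add: add_nonneg_pos)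
  have \<epsilon>: "\<epsilon> > 0" using \<alpha> \<nu> g0 ad by (simp add: \<epsilon>_def)
  have "\<epsilon> * (\<bar>\<tau>\<bar> + 1) \<le> \<alpha> * \<nu>"
    using \<alpha> \<nu> by (simp add: \<epsilon>_def pos_le_divide_eq[symmetric])
  hence lhs_nonneg: "\<alpha> * \<nu> + \<epsilon> * \<tau> \<ge> 0"
    using \<epsilon> abs_ge_minus_self[of \<tau>] mult_left_mono[of "-\<tau>" "\<bar>\<tau>\<bar>" \<epsilon>] by (simp add: algebra_simps)
  have "\<epsilon> * (\<alpha> * d + 1) \<le> 2 * \<nu> * g"
    using ad by (simp add: \<epsilon>_def pos_le_divide_eq[symmetric])
  hence "\<epsilon> * \<alpha> * (\<epsilon> * (\<alpha> * d)) \<le> \<epsilon> * \<alpha> * (2 * \<nu> * g)"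
    using \<epsilon> \<alpha> by (intro mult_left_mono) (auto simp: algebra_simps)
  hence small: "\<epsilon>^2 * \<alpha>^2 * d \<le> 2 * \<epsilon> * \<alpha> * (g * \<nu>)"
    by (simp add: power2_eq_square algebra_simps)
  have "norm (X + \<epsilon> *\<^sub>R D)^2 = \<nu>^2 + 2 * \<epsilon> * (X \<bullet> D) + \<epsilon>^2 * d"
    unfolding power2_norm_eq_inner \<nu>_def d_def
    by (simp add: inner_add_left inner_add_right inner_commute power2_eq_square algebra_simps)
  hence "(\<alpha> * \<nu> + \<epsilon> * \<tau>)^2 - (\<alpha> * norm (X + \<epsilon> *\<^sub>R D))^2
      = 2 * \<epsilon> * \<alpha> * (\<tau> * \<nu> - \<alpha> * (X \<bullet> D)) + \<epsilon>^2 * \<tau>^2 - \<epsilon>^2 * \<alpha>^2 * d"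
    by (simp add: power_mult_distrib power2_eq_square algebra_simps)
  also have "\<tau> * \<nu> - \<alpha> * (X \<bullet> D) = g * \<nu>"
    using \<nu> by (simp add: g_def \<tau>_def \<nu>_def field_simps)
  finally have "(\<alpha> * norm (X + \<epsilon> *\<^sub>R D))^2 \<le> (\<alpha> * \<nu> + \<epsilon> * \<tau>)^2"
    using small zero_le_power2[of "\<epsilon> * \<tau>"] unfolding power_mult_distrib by linarith
  hence "\<alpha> * norm (X + \<epsilon> *\<^sub>R D) \<le> \<alpha> * \<nu> + \<epsilon> * \<tau>"
    using lhs_nonneg by (rule power2_le_imp_le)
  moreover have "(X + \<epsilon> *\<^sub>R D) \<bullet> w = \<alpha> * \<nu> + \<epsilon> * \<tau>"
    using X by (simp add: inner_add_left \<nu>_def \<tau>_def)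
  ultimately show ?thesis using \<epsilon> by auto
qed

lemma cone_interior_feasible_directions:
  fixes X D :: "'a::real_normed_vector" and f :: "'a \<Rightarrow> real"
  assumes gap: "f X > \<alpha> * norm X" and lin: "linear f" and \<alpha>: "\<alpha> \<ge> 0"
  shows "\<exists>\<epsilon>>0. f (X + \<epsilon> *\<^sub>R D) \<ge> \<alpha> * norm (X + \<epsilon> *\<^sub>R D)
              \<and> f (X - \<epsilon> *\<^sub>R D) \<ge> \<alpha> * norm (X - \<epsilon> *\<^sub>R D)"
proof -
  define \<gamma> where "\<gamma> = f X - \<alpha> * norm X"
  define \<epsilon> where "\<epsilon> = \<gamma> / (\<bar>f D\<bar> + \<alpha> * norm D + 1)"
  have den: "\<bar>f D\<bar> + \<alpha> * norm D + 1 > 0" using \<alpha> by (simp add: add_nonneg_pos)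
  have \<epsilon>: "\<epsilon> > 0" using gap den by (simp add: \<epsilon>_def \<gamma>_def)
  have "\<epsilon> * (\<bar>f D\<bar> + \<alpha> * norm D + 1) = \<gamma>" using den by (simp add: \<epsilon>_def)
  hence small: "\<epsilon> * \<bar>f D\<bar> + \<alpha> * (\<epsilon> * norm D) \<le> \<gamma>" using \<epsilon> by (simp add: algebra_simps)
  have "f (X + c *\<^sub>R D) \<ge> \<alpha> * norm (X + c *\<^sub>R D)" if c: "\<bar>c\<bar> = \<epsilon>" for c
  proof -
    have "\<alpha> * norm (X + c *\<^sub>R D) \<le> \<alpha> * (norm X + \<epsilon> * norm D)"
      using norm_triangle_ineq[of X "c *\<^sub>R D"] c \<alpha> by (intro mult_left_mono) auto
    moreover have "f (X + c *\<^sub>R D) \<ge> f X - \<epsilon> * \<bar>f D\<bar>"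
      using c abs_mult[of c "f D"] by (simp add: linear_add[OF lin] linear_scale[OF lin])
    ultimately show ?thesis using small \<gamma>_def by (simp add: algebra_simps)
  qed
  from this[of \<epsilon>] this[of "-\<epsilon>"] \<epsilon> show ?thesis by (auto simp: algebra_simps)
qed

section \<open>Positive definiteness criteria\<close>

lemma deviation_bound_of_trace_bound:
  fixes d a n :: real
  assumes n: "n \<ge> 1" and bound: "(n - 1) * d < a^2"
  shows "(d - a^2/n) * (1 - 1/n) < (a/n)^2"
proof -
  have "(d - a^2/n) * (1 - 1/n) * n^2 = (n - 1) * d * n - (n - 1) * a^2"
    using n by (simp add: field_simps power2_eq_square)
  also have "\<dots> < a^2 * n - (n - 1) * a^2"
    using bound n by (simp add: mult_strict_right_mono)
  also have "\<dots> = (a/n)^2 * n^2" using n by (simp add: field_simps power2_eq_square)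
  finally show ?thesis using n by simp
qed

text \<open>A symmetric matrix whose Frobenius norm is small compared to its trace is positive definite:
  the distance from \<open>N\<close> to the ray through \<open>I\<close> is less than the distance from that ray to any
  rank-one direction \<open>u u\<^sup>T\<close>.\<close>

lemma posdef_of_trace_bound:
  fixes N :: "real^'n^'n"
  assumes symm: "symm N" and tr: "N \<bullet> mat 1 > 0"
    and bound: "(real CARD('n) - 1) * (N \<bullet> N) < (N \<bullet> mat 1)^2"
  shows "posdef N"
  unfolding posdef_def
proof (intro conjI allI impI)
  fix u :: "real^'n" assume "u \<noteq> 0"
  define n a c where "n = real CARD('n)" and "a = N \<bullet> mat 1" and "c = u \<bullet> u"
  have n: "n \<ge> 1" and c: "c > 0" using \<open>u \<noteq> 0\<close> by (simp_all add: n_def c_def)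
  define W where "W = outer_prod u - (c/n) *\<^sub>R mat 1"
  define M where "M = N - (a/n) *\<^sub>R mat 1"
  have I: "mat 1 \<bullet> (mat 1::real^'n^'n) = n" by (simp add: inner_mat_1_self n_def)
  have Iu: "mat 1 \<bullet> outer_prod u = c" using inner_outer_prod_mat_1[of u] by (simp add: c_def inner_commute)
  have Iu': "outer_prod u \<bullet> mat 1 = c" by (simp add: inner_outer_prod_mat_1 c_def)
  have uu: "outer_prod u \<bullet> outer_prod u = c^2" by (simp add: inner_outer_prod_self c_def)
  have MW: "M \<bullet> W = u \<bullet> (N *v u) - a * c / n"
    using n unfolding M_def W_def a_def inner_matrix_vector_outer_prod
    by (simp add: inner_diff_left inner_diff_right I Iu Iu' field_simps)
  have MM: "M \<bullet> M = N \<bullet> N - a^2/n"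
    using n unfolding M_def a_def
    by (simp add: inner_diff_left inner_diff_right I inner_commute field_simps power2_eq_square)
  have WW: "W \<bullet> W = c^2 * (1 - 1/n)"
    using n unfolding W_def
    by (simp add: inner_diff_left inner_diff_right I Iu Iu' uu field_simps power2_eq_square)
  have "(N \<bullet> N - a^2/n) * (1 - 1/n) < (a/n)^2"
    using deviation_bound_of_trace_bound[OF n] bound by (simp add: a_def n_def)
  hence "c^2 * ((N \<bullet> N - a^2/n) * (1 - 1/n)) < c^2 * (a/n)^2" using c by simp
  moreover have "(M \<bullet> W)^2 \<le> c^2 * ((N \<bullet> N - a^2/n) * (1 - 1/n))"
    using Cauchy_Schwarz_ineq[of M W] unfolding MM WW by (simp add: mult_ac)
  moreover have "c^2 * (a/n)^2 = (a * c / n)^2" by (simp add: power_mult_distrib power_divide)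
  ultimately have "(M \<bullet> W)^2 < (a * c / n)^2" by linarith
  moreover have "a * c / n \<ge> 0" using tr c n by (simp add: a_def)
  ultimately have "\<bar>M \<bullet> W\<bar> < a * c / n"
    using power2_less_imp_less[of "\<bar>M \<bullet> W\<bar>" "a * c / n"] by simp
  thus "u \<bullet> (N *v u) > 0" using MW by simp
qed (rule symm)

lemma abs_quadratic_form_le:
  fixes X :: "real^'n^'n"
  assumes "X \<bullet> X = 1"
  shows "\<bar>v \<bullet> (X *v v)\<bar> \<le> v \<bullet> v"
proof -
  have "(v \<bullet> (X *v v))^2 \<le> (X \<bullet> X) * (outer_prod v \<bullet> outer_prod v)"
    unfolding inner_matrix_vector_outer_prod by (rule Cauchy_Schwarz_ineq)
  thus ?thesis by (simp add: assms inner_outer_prod_self abs_le_square_iff[symmetric])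
qed

text \<open>The factor \<open>I - \<alpha> X\<close> is positive definite, and a nonpositive value of the quadratic form
  of \<open>I + s X\<close> would make that of the product nonpositive as well.\<close>

lemma posdef_of_posdef_product:
  fixes X :: "real^'n^'n"
  assumes symm: "symm X" and unit: "X \<bullet> X = 1" and \<alpha>: "0 < \<alpha>" "\<alpha> < 1" and s: "0 \<le> s"
    and prod: "posdef (mat 1 + (s - \<alpha>) *\<^sub>R X - (s * \<alpha>) *\<^sub>R (X ** X))"
  shows "posdef (mat 1 + s *\<^sub>R X)"
  unfolding posdef_def
proof (intro conjI allI impI)
  show "symm (mat 1 + s *\<^sub>R X)" using symm by simp
  fix v :: "real^'n" assume "v \<noteq> 0"
  define c x w where "c = v \<bullet> v" and "x = v \<bullet> (X *v v)" and "w = (X *v v) \<bullet> (X *v v)"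
  have c: "c > 0" using \<open>v \<noteq> 0\<close> by (simp add: c_def)
  have first: "v \<bullet> ((mat 1 + s *\<^sub>R X) *v v) = c + s * x"
    by (simp add: c_def x_def matrix_vector_mult_add_rdistrib scaleR_matrix_vector_assoc[symmetric]
        inner_add_right)
  have "v \<bullet> ((X ** X) *v v) = w"
    using symm_inner_commute[OF symm, of v "X *v v"] by (simp add: w_def matrix_vector_mul_assoc[symmetric])
  hence product: "v \<bullet> ((mat 1 + (s - \<alpha>) *\<^sub>R X - (s * \<alpha>) *\<^sub>R (X ** X)) *v v)
      = c + (s - \<alpha>) * x - s * \<alpha> * w"
    by (simp add: c_def x_def matrix_vector_mult_add_rdistrib matrix_vector_mult_diff_rdistrib
        scaleR_matrix_vector_assoc[symmetric] inner_add_right inner_diff_right)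
  have "\<alpha> * x \<le> \<alpha> * c"
    using \<alpha> abs_quadratic_form_le[OF unit, of v] by (intro mult_left_mono) (auto simp: x_def c_def)
  moreover have "\<alpha> * c < c" using \<alpha> c by simp
  ultimately have second: "c - \<alpha> * x > 0" by linarith
  have "x^2 \<le> c * w" unfolding x_def c_def w_def by (rule Cauchy_Schwarz_ineq)
  hence "s * \<alpha> * x^2 \<le> s * \<alpha> * (c * w)" using s \<alpha> by (intro mult_left_mono) auto
  hence "c * (c + (s - \<alpha>) * x - s * \<alpha> * w) \<le> (c + s * x) * (c - \<alpha> * x)"
    by (simp add: algebra_simps power2_eq_square)
  moreover have "c + (s - \<alpha>) * x - s * \<alpha> * w > 0"
    using prod \<open>v \<noteq> 0\<close> unfolding posdef_def product[symmetric] by blast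
  ultimately have "(c + s * x) * (c - \<alpha> * x) > 0"
    using mult_pos_pos[OF c] by (meson less_le_trans)
  thus "0 < v \<bullet> ((mat 1 + s *\<^sub>R X) *v v)"
    using first second by (simp add: zero_less_mult_iff)
qed

text \<open>In whitened coordinates the step direction is a symmetric unit matrix \<open>U\<close> with
  \<open>tr U = \<alpha>\<close>, and the product of the moved centre with the dual slack is a multiple of
  \<open>N s = (I + s U)(I - \<alpha> U)\<close>.\<close>

locale unit_direction =
  fixes U :: "real^'n^'n" and \<alpha> :: real
  assumes symm_U: "symm U" and unit_U: "U \<bullet> U = 1" and trace_U: "U \<bullet> mat 1 = \<alpha>"
    and alpha: "0 < \<alpha>" "\<alpha> < 1"
begin

definition tr3 :: real where "tr3 = U \<bullet> (U ** U)"

definition tr4 :: real where "tr4 = (U ** U) \<bullet> (U ** U)"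

definition quad_coeff :: real where "quad_coeff = 1 - 2 * \<alpha> * tr3 + \<alpha>^2 * tr4"

definition lin_coeff :: real where "lin_coeff = \<alpha> * (1 - \<alpha> * tr3)"

definition vertex :: real where "vertex = lin_coeff / quad_coeff"

definition N :: "real \<Rightarrow> real^'n^'n" where
  "N s = mat 1 + (s - \<alpha>) *\<^sub>R U - (s * \<alpha>) *\<^sub>R (U ** U)"

lemma N_eq_product: "(mat 1 + s *\<^sub>R U) ** (mat 1 - \<alpha> *\<^sub>R U) = N s"
  by (simp add: N_def matrix_add_ldistrib matrix_add_rdistrib matrix_diff_ldistrib matrix_diff_rdistrib
      matrix_scalar_ac scalar_matrix_assoc[symmetric] algebra_simps)

lemma symm_N: "symm (N s)"
  using symm_U by (simp add: N_def symm_square)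

lemma trace_square_U: "(U ** U) \<bullet> mat 1 = 1"
  using trace_mult_symm_eq_inner[OF symm_U, of U] trace_eq_inner_mat_1[of "U ** U"] unit_U by simp

lemma inner_N_mat_1: "N s \<bullet> mat 1 = real CARD('n) - \<alpha>^2"
  by (simp add: N_def inner_add_left inner_diff_left trace_square_U trace_U inner_mat_1_self
      algebra_simps power2_eq_square)

lemma trace_N: "trace (N s) = real CARD('n) - \<alpha>^2"
  by (simp add: trace_eq_inner_mat_1 inner_N_mat_1)

lemma inner_N_self: "N s \<bullet> N s = real CARD('n) - \<alpha>^2 + quad_coeff * s^2 - 2 * lin_coeff * s"
proof -
  have "mat 1 \<bullet> (U ** U) = 1" "mat 1 \<bullet> U = \<alpha>" "(U ** U) \<bullet> U = tr3"
    using trace_square_U trace_U by (simp_all add: inner_commute tr3_def)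
  thus ?thesis
    by (simp add: N_def quad_coeff_def lin_coeff_def tr3_def tr4_def inner_add_left inner_add_right
        inner_diff_left inner_diff_right trace_square_U trace_U unit_U inner_mat_1_self
        algebra_simps power2_eq_square)
qed

lemma tr3_le_1: "tr3 \<le> 1" and tr4_le_1: "tr4 \<le> 1" and tr3_square_le: "tr3^2 \<le> tr4"
proof -
  have "norm U = 1" using unit_U by (simp add: norm_eq_sqrt_inner)
  hence UU: "norm (U ** U) \<le> 1" using matrix_mult_norm_le[of U U] by simp
  show "tr3 \<le> 1"
    using norm_cauchy_schwarz[of U "U ** U"] \<open>norm U = 1\<close> UU unfolding tr3_def by simp
  show "tr4 \<le> 1"
    using UU unfolding tr4_def by (metis norm_eq_sqrt_inner real_sqrt_le_1_iff)
  show "tr3^2 \<le> tr4"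
    using Cauchy_Schwarz_ineq[of U "U ** U"] unit_U unfolding tr3_def tr4_def by simp
qed

lemma alpha_tr3_lt_1: "\<alpha> * tr3 < 1"
proof (cases "tr3 \<le> 0")
  case True
  hence "\<alpha> * tr3 \<le> 0" using alpha by (simp add: mult_nonneg_nonpos)
  thus ?thesis by simp
next
  case False
  hence "\<alpha> * tr3 \<le> \<alpha>" using alpha tr3_le_1 by (simp add: mult_left_le)
  thus ?thesis using alpha by linarith
qed

lemma quad_coeff_pos: "quad_coeff > 0"
proof -
  have "\<alpha>^2 * tr3^2 \<le> \<alpha>^2 * tr4" using tr3_square_le by (intro mult_left_mono) auto
  hence "quad_coeff \<ge> (1 - \<alpha> * tr3)^2" by (simp add: quad_coeff_def power2_eq_square algebra_simps)
  moreover have "(1 - \<alpha> * tr3)^2 > 0" using alpha_tr3_lt_1 by simp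
  ultimately show ?thesis by linarith
qed

lemma alpha_square_lt_1: "\<alpha>^2 < 1"
  using alpha by (simp add: power_less_one_iff abs_less_iff)

lemma alpha_square_lt_card: "\<alpha>^2 < real CARD('n)"
proof -
  have "real CARD('n) \<ge> 1" by simp
  thus ?thesis using alpha_square_lt_1 by linarith
qed

lemma half_alpha_lt_vertex: "\<alpha> / 2 < vertex"
proof -
  have "\<alpha>^2 * tr4 < 1" using alpha_square_lt_1 tr4_le_1 mult_left_le[of tr4 "\<alpha>^2"] by simp
  hence "\<alpha> * (\<alpha>^2 * tr4) < \<alpha> * 1" using alpha by (intro mult_strict_left_mono) auto
  hence "\<alpha> * quad_coeff < 2 * lin_coeff"
    by (simp add: quad_coeff_def lin_coeff_def algebra_simps power2_eq_square)
  thus ?thesis using quad_coeff_pos by (simp add: vertex_def field_simps)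
qed

definition next_alpha :: real where "next_alpha = \<alpha> * sqrt ((1 + \<alpha>) / 2)"

lemma next_alpha_square: "next_alpha^2 = \<alpha>^2 * ((1 + \<alpha>) / 2)"
  using alpha by (simp add: next_alpha_def power_mult_distrib)

lemma next_alpha_nonneg: "0 \<le> next_alpha"
  using alpha by (simp add: next_alpha_def)

lemma next_alpha_le_1: "next_alpha \<le> 1"
proof -
  have "sqrt ((1 + \<alpha>) / 2) \<le> 1" using alpha by simp
  hence "next_alpha \<le> \<alpha>" using alpha mult_left_le[of "sqrt ((1 + \<alpha>) / 2)" \<alpha>] by (simp add: next_alpha_def)
  thus ?thesis using alpha by simp
qed

text \<open>The choice of \<open>\<beta>\<close> makes \<open>\<alpha>\<^sup>2 - \<beta>\<^sup>2 = \<alpha>\<^sup>2(1 - \<alpha>)/2\<close>, which is exactly what the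
  decrease of \<open>\<parallel>N s\<parallel>\<^sup>2\<close> below \<open>n - \<alpha>\<^sup>2\<close> on the interval around the vertex pays for.\<close>

lemma inner_N_self_bound:
  assumes s: "\<bar>s - vertex\<bar> \<le> vertex - \<alpha> / 2"
  shows "(real CARD('n) - next_alpha^2) * (N s \<bullet> N s) < (real CARD('n) - \<alpha>^2)^2"
proof -
  define n where "n = real CARD('n)"
  define Q where "Q = quad_coeff * s^2 - 2 * lin_coeff * s"
  have lin: "lin_coeff = quad_coeff * vertex" using quad_coeff_pos by (simp add: vertex_def)
  have "(s - vertex)^2 \<le> (vertex - \<alpha>/2)^2"
    using s power_mono[of "\<bar>s - vertex\<bar>" "vertex - \<alpha>/2" 2] by simp
  hence "quad_coeff * (s - vertex)^2 \<le> quad_coeff * (vertex - \<alpha>/2)^2"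
    using quad_coeff_pos by (intro mult_left_mono) auto
  hence "Q \<le> - \<alpha> * lin_coeff + quad_coeff * \<alpha>^2 / 4"
    by (simp add: Q_def lin power2_eq_square algebra_simps)
  also have "\<dots> = - (\<alpha>^2 * (1 - \<alpha>) / 2) - (\<alpha>^2 / 4) * (1 + 2 * \<alpha> * (1 - tr3) - \<alpha>^2 * tr4)"
    by (simp add: quad_coeff_def lin_coeff_def field_simps power2_eq_square)
  also have "\<dots> < - (\<alpha>^2 * (1 - \<alpha>) / 2)"
  proof -
    have "\<alpha>^2 * tr4 \<le> \<alpha>^2" using tr4_le_1 by (simp add: mult_left_le)
    moreover have "2 * \<alpha> * (1 - tr3) \<ge> 0" using alpha tr3_le_1 by simp
    ultimately have "1 + 2 * \<alpha> * (1 - tr3) - \<alpha>^2 * tr4 > 0" using alpha_square_lt_1 by linarith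
    thus ?thesis using alpha by simp
  qed
  also have "\<alpha>^2 * (1 - \<alpha>) / 2 = \<alpha>^2 - next_alpha^2"
    by (simp add: next_alpha_square field_simps)
  finally have Q: "Q < - (\<alpha>^2 - next_alpha^2)" .
  have gap: "\<alpha>^2 - next_alpha^2 \<ge> 0" using alpha by (simp add: next_alpha_square algebra_simps)
  have "n \<ge> 1" by (simp add: n_def)
  hence nb: "n - next_alpha^2 > 0" using alpha_square_lt_1 gap by linarith
  have "(n - next_alpha^2) * Q < (n - next_alpha^2) * (- (\<alpha>^2 - next_alpha^2))"
    using Q nb by (intro mult_strict_left_mono) auto
  moreover have "(n - next_alpha^2) * (\<alpha>^2 - next_alpha^2) \<ge> (n - \<alpha>^2) * (\<alpha>^2 - next_alpha^2)"
    using gap by (intro mult_right_mono) auto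
  moreover have "(n - next_alpha^2) * (n - \<alpha>^2 + Q)
      = (n - \<alpha>^2)^2 + (n - next_alpha^2) * Q + (n - \<alpha>^2) * (\<alpha>^2 - next_alpha^2)"
    by (simp add: algebra_simps power2_eq_square)
  ultimately show ?thesis unfolding inner_N_self Q_def n_def by (simp add: algebra_simps)
qed

lemma posdef_shift:
  assumes s: "\<bar>s - vertex\<bar> \<le> vertex - \<alpha> / 2"
  shows "posdef (mat 1 + s *\<^sub>R U)"
proof (rule posdef_of_posdef_product[OF symm_U unit_U alpha])
  show "0 \<le> s" using s alpha by (simp add: abs_le_iff)
  have "real CARD('n) - 1 \<le> real CARD('n) - next_alpha^2"
    using next_alpha_le_1 next_alpha_nonneg by (simp add: power_le_one)
  hence "(real CARD('n) - 1) * (N s \<bullet> N s) \<le> (real CARD('n) - next_alpha^2) * (N s \<bullet> N s)"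
    by (intro mult_right_mono) auto
  hence "(real CARD('n) - 1) * (N s \<bullet> N s) < (N s \<bullet> mat 1)^2"
    using inner_N_self_bound[OF s] by (simp add: inner_N_mat_1)
  moreover have "N s \<bullet> mat 1 > 0"
    using alpha_square_lt_card by (simp add: inner_N_mat_1)
  ultimately have "posdef (N s)" by (intro posdef_of_trace_bound symm_N)
  thus "posdef (mat 1 + (s - \<alpha>) *\<^sub>R U - (s * \<alpha>) *\<^sub>R (U ** U))" by (simp add: N_def)
qed

end

lemma opA_add: "opA A (X + Y) = opA A X + opA A Y"
  by (simp add: opA_def vec_eq_iff matrix_add_ldistrib trace_add)

lemma opA_diff: "opA A (X - Y) = opA A X - opA A Y"
  by (simp add: opA_def vec_eq_iff matrix_diff_ldistrib trace_sub)

lemma opA_scaleR: "opA A (c *\<^sub>R X) = c *\<^sub>R opA A X"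
  by (simp add: opA_def vec_eq_iff matrix_scalar_ac trace_scaleR_mult)

lemma opA_zero: "opA A 0 = 0"
  by (simp add: opA_def vec_eq_iff)

lemma linear_opA: "linear (opA A)"
  by (rule linearI) (simp_all add: opA_add opA_scaleR)

lemma inner_opA: "y \<bullet> opA A X = trace (opAadj A y ** X)"
  by (simp add: opAadj_def trace_sum_mult trace_scaleR_mult inner_vec_def opA_def)

lemma linear_opAadj: "linear (opAadj A)"
  by (rule linearI) (simp_all add: opAadj_def scaleR_add_left sum.distrib scaleR_sum_right)

lemma span_range_eq_range_opAadj:
  fixes A :: "'m::finite \<Rightarrow> real^'n^'n"
  shows "span (range A) = range (opAadj A)"
proof
  have "opAadj A (axis i 1) = A i" for i
  proof -
    have "opAadj A (axis i 1) = (\<Sum>j\<in>UNIV. if j = i then A j else 0)"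
      unfolding opAadj_def by (rule sum.cong) (auto simp: axis_def)
    thus ?thesis by simp
  qed
  hence "range A \<subseteq> range (opAadj A)" by (metis image_subsetI rangeI)
  thus "span (range A) \<subseteq> range (opAadj A)"
    by (intro span_minimal linear_subspace_image[OF linear_opAadj subspace_UNIV])
  show "range (opAadj A) \<subseteq> span (range A)"
    unfolding opAadj_def by (clarsimp, intro span_sum span_scale span_base) auto
qed

lemma symm_of_mem_span:
  fixes A :: "'m \<Rightarrow> real^'n^'n"
  assumes "\<And>i. symm (A i)" "W \<in> span (range A)"
  shows "symm W"
proof -
  have "span (range A) \<subseteq> {M::real^'n^'n. symm M}"
    using assms(1) by (intro span_minimal) (auto simp: subspace_def)
  thus ?thesis using assms(2) by auto
qed

lemma mem_span_of_orthogonal_kernel: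
  fixes A :: "'m::finite \<Rightarrow> real^'n^'n"
  assumes symm_A: "\<And>i. symm (A i)" and symm_W: "symm W"
    and orth: "\<And>D. symm D \<Longrightarrow> opA A D = 0 \<Longrightarrow> trace (W ** D) = 0"
  shows "W \<in> span (range A)"
proof -
  obtain y z where y: "y \<in> span (range A)" and z: "\<And>w. w \<in> span (range A) \<Longrightarrow> orthogonal z w"
    and W: "W = y + z"
    using orthogonal_subspace_decomp_exists[of "range A" W] by metis
  have symm_z: "symm z" using symm_W symm_of_mem_span[OF symm_A y] W by (metis add_diff_cancel_left' symm_diff)
  have "trace (A i ** z) = 0" for i
    using z[of "A i"] by (simp add: span_base trace_mult_symm_eq_inner[OF symm_z] orthogonal_def inner_commute)
  hence "opA A z = 0" by (simp add: opA_def vec_eq_iff)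
  hence "W \<bullet> z = 0" using orth[OF symm_z] by (simp add: trace_mult_symm_eq_inner[OF symm_z])
  moreover have "y \<bullet> z = 0" using z[OF y] by (simp add: orthogonal_def inner_commute)
  ultimately have "z = 0" by (simp add: W inner_add_left)
  thus ?thesis using W y by simp
qed

text \<open>A Farkas lemma for a single inequality.\<close>

lemma linear_proportional_of_pos_imp_nonneg:
  fixes f g :: "'a::real_vector \<Rightarrow> real"
  assumes lin: "linear f" "linear g"
    and P: "\<And>D c. P D \<Longrightarrow> P (D + c *\<^sub>R z)" "\<And>D. P D \<Longrightarrow> P (- D)" "P z"
    and gz: "g z > 0"
    and H: "\<And>D. P D \<Longrightarrow> g D > 0 \<Longrightarrow> f D \<ge> 0"
  shows "f z \<ge> 0" "\<And>D. P D \<Longrightarrow> f D = (f z / g z) * g D"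
proof -
  note f = linear_add[OF lin(1)] linear_scale[OF lin(1)] linear_neg[OF lin(1)]
  note g = linear_add[OF lin(2)] linear_scale[OF lin(2)] linear_neg[OF lin(2)]
  show fz: "f z \<ge> 0" using H[OF P(3) gz] .
  have nonneg: "f D \<ge> 0" if "P D" "g D = 0" for D
  proof (rule ccontr)
    assume "\<not> f D \<ge> 0"
    define e where "e = - f D / (f z + 1)"
    have e: "e > 0" using \<open>\<not> f D \<ge> 0\<close> fz by (simp add: e_def divide_neg_pos)
    have "g (D + e *\<^sub>R z) > 0" using that gz e by (simp add: g)
    hence "f D + e * f z \<ge> 0" using H P(1)[OF that(1)] by (fastforce simp: f)
    moreover have "e * (f z + 1) = - f D" using fz by (simp add: e_def)
    ultimately show False using e by (simp add: algebra_simps)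
  qed
  fix D assume "P D"
  define D1 where "D1 = D + (- (g D / g z)) *\<^sub>R z"
  have "P D1" unfolding D1_def by (rule P(1)[OF \<open>P D\<close>])
  have "g D1 = 0" using gz by (simp only: D1_def g) simp
  hence "f D1 = 0" using nonneg[of D1] nonneg[of "- D1"] P(2) \<open>P D1\<close> by (fastforce simp: f g)
  hence "f D - (g D / g z) * f z = 0" by (simp only: D1_def f) simp
  thus "f D = (f z / g z) * g D" using gz by (simp add: field_simps)
qed

section \<open>The dual cone of \<open>K\<^sub>E(\<beta>)\<close> and existence of optimal solutions\<close>

lemma continuous_on_linear:
  "linear f \<Longrightarrow> continuous_on UNIV (f :: 'a::euclidean_space \<Rightarrow> 'b::real_normed_vector)"
  by (simp add: linear_conv_bounded_linear linear_continuous_on)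

context whitening
begin

lemma trace_E_mult: "trace (E ** S) = trace (whiten_dual S)"
  using trace_whiten_mult_whiten_dual[of E S] by (simp add: whiten_E)

lemma trace_square_E_mult:
  "symm S \<Longrightarrow> sqrt (trace ((E ** S) ** (E ** S))) = norm (whiten_dual S)"
  using trace_square_whiten_mult_whiten_dual[of E S]
  by (simp add: whiten_E trace_mult_symm_eq_inner symm_whiten_dual norm_eq_sqrt_inner)

lemma mem_dual_cone_KE:
  assumes "symm S" "0 \<le> \<beta>" "\<beta>^2 \<le> real CARD('n)"
    and "trace (whiten_dual S) \<ge> sqrt (real CARD('n) - \<beta>^2) * norm (whiten_dual S)"
  shows "S \<in> dual_cone (KE E \<beta>)"
  unfolding dual_cone_def
proof (intro CollectI conjI ballI)
  fix Y assume "Y \<in> KE E \<beta>"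
  hence "symm Y" "whiten Y \<bullet> mat 1 \<ge> \<beta> * norm (whiten Y)"
    by (auto simp: mem_KE_iff trace_eq_inner_mat_1)
  hence "whiten_dual S \<bullet> whiten Y \<ge> 0"
    using assms by (intro circular_cone_dual[OF inner_mat_1_self]) (auto simp: trace_eq_inner_mat_1)
  thus "trace (S ** Y) \<ge> 0"
    by (subst trace_mult_eq_whiten) (simp add: trace_mult_symm_eq_inner symm_whiten[OF \<open>symm Y\<close>])
qed (rule assms(1))

lemma closed_KE: "closed (KE E \<gamma>)"
proof -
  have "KE E \<gamma> = {Y. transpose Y = Y} \<inter> {Y. \<gamma> * norm (whiten Y) \<le> trace (whiten Y)}"
    by (auto simp: mem_KE_iff symm_def)
  moreover have "closed {Y::real^'n^'n. transpose Y = Y}"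
    by (intro closed_Collect_eq continuous_on_linear continuous_on_id) (simp add: linearI transpose_def vec_eq_iff)
  moreover have "closed {Y. \<gamma> * norm (whiten Y) \<le> trace (whiten Y)}"
    using continuous_on_linear[OF linear_whiten] continuous_on_linear[OF linear_compose[OF linear_whiten linear_trace]]
    by (intro closed_Collect_le continuous_intros) (auto simp: o_def)
  ultimately show ?thesis by auto
qed

end

lemma int_dual_cone_KE:
  fixes E S :: "real^'n^'n"
  assumes "posdef E" "symm S" "0 \<le> \<beta>" "\<beta>^2 \<le> real CARD('n)"
    and "trace (E ** S) > sqrt (real CARD('n) - \<beta>^2) * sqrt (trace ((E ** S) ** (E ** S)))"
  shows "S \<in> int_sym (dual_cone (KE E \<beta>))"
proof -
  obtain L where "whitening E L" using posdef_whitening[OF assms(1)] .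
  then interpret whitening E L .
  define c where "c = sqrt (real CARD('n) - \<beta>^2)"
  define V where "V = {T. c * norm (whiten_dual T) < trace (whiten_dual T)}"
  have "open V"
    unfolding V_def using continuous_on_linear[OF linear_whiten_dual]
      continuous_on_linear[OF linear_compose[OF linear_whiten_dual linear_trace]]
    by (intro open_Collect_less continuous_intros) (auto simp: o_def)
  moreover have "S \<in> V"
    using assms(2,5) by (simp add: V_def c_def trace_E_mult trace_square_E_mult)
  ultimately obtain e where "e > 0" "ball S e \<subseteq> V" by (rule openE)
  have "T \<in> dual_cone (KE E \<beta>)" if "symm T" "T \<in> V" for T
    using that assms(3,4) by (intro mem_dual_cone_KE) (auto simp: V_def c_def)
  moreover have "T \<in> V" if "norm (T - S) < e" for T
    using that \<open>ball S e \<subseteq> V\<close> by (auto simp: dist_norm norm_minus_commute)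
  ultimately show ?thesis
    unfolding int_sym_def using \<open>e > 0\<close> \<open>S \<in> V\<close> assms(2) by blast
qed

lemma int_dual_cone_coercive:
  assumes S: "S \<in> int_sym (dual_cone K)" and symm_K: "\<And>Y. Y \<in> K \<Longrightarrow> symm Y"
  obtains e where "e > 0" "\<And>Y. Y \<in> K \<Longrightarrow> trace (S ** Y) \<ge> e * norm Y"
proof -
  obtain e where e: "e > 0" and ball: "\<And>T. symm T \<Longrightarrow> norm (T - S) < e \<Longrightarrow> T \<in> dual_cone K"
    using S unfolding int_sym_def by blast
  have symm_S: "symm S" using S unfolding int_sym_def dual_cone_def by auto
  have "trace (S ** Y) \<ge> (e/2) * norm Y" if Y: "Y \<in> K" for Y
  proof (cases "Y = 0")
    case False
    hence "norm Y > 0" by simp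
    define T where "T = S - (e / (2 * norm Y)) *\<^sub>R Y"
    have "norm (T - S) = e / 2" using \<open>norm Y > 0\<close> e by (simp add: T_def)
    hence "T \<in> dual_cone K" using ball[of T] symm_S symm_K[OF Y] e by (simp add: T_def)
    hence "trace (S ** Y) - (e / (2 * norm Y)) * trace (Y ** Y) \<ge> 0"
      using Y by (simp add: dual_cone_def T_def matrix_diff_rdistrib trace_sub trace_scaleR_mult)
    moreover have "trace (Y ** Y) = norm Y * norm Y"
      by (simp add: trace_mult_symm_eq_inner[OF symm_K[OF Y]] norm_eq_sqrt_inner)
    ultimately show ?thesis using \<open>norm Y > 0\<close> by (simp add: field_simps)
  qed simp
  thus ?thesis using e by (intro that[of "e/2"]) auto
qed

lemma attains_inf_of_compact_sublevel:
  fixes f :: "'a::topological_space \<Rightarrow> real"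
  assumes "compact {x \<in> F. f x \<le> f x0}" "x0 \<in> F" "continuous_on UNIV f"
  obtains x where "x \<in> F" "\<And>y. y \<in> F \<Longrightarrow> f x \<le> f y"
proof -
  obtain x where x: "x \<in> {x \<in> F. f x \<le> f x0}" and min: "\<And>y. y \<in> {x \<in> F. f x \<le> f x0} \<Longrightarrow> f x \<le> f y"
    using continuous_attains_inf[OF assms(1)] continuous_on_subset[OF assms(3)] assms(2) by blast
  have "f x \<le> f y" if "y \<in> F" for y
    using min[of y] x that by (cases "f y \<le> f x0") auto
  thus ?thesis using x that by blast
qed

text \<open>If the dual slack lies in the interior of the dual cone, the objective is coercive on the
  feasible set, so its sublevel sets are compact.\<close>

lemma QP_opt_exists:
  fixes A :: "'m::finite \<Rightarrow> real^'n^'n" and b :: "real^'m" and y :: "real^'m"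
  assumes E: "posdef E" "opA A E = b" and \<beta>: "0 \<le> \<beta>" "\<beta> \<le> 1"
    and dual_feasible: "opAadj A y + S = C" and S: "S \<in> int_sym (dual_cone (KE E \<beta>))"
  shows "\<exists>X. QP_opt A b C E \<beta> X"
proof -
  obtain L where "whitening E L" using posdef_whitening[OF E(1)] .
  then interpret whitening E L .
  obtain e where e: "e > 0" and coercive: "\<And>Y. Y \<in> KE E \<beta> \<Longrightarrow> trace (S ** Y) \<ge> e * norm Y"
    using int_dual_cone_coercive[OF S] by (auto simp: KE_def)
  define F where "F = {Y. opA A Y = b} \<inter> KE E \<beta>"
  define level where "level = {Y \<in> F. trace (C ** Y) \<le> trace (C ** E)}"
  have "bounded level"
    unfolding bounded_iff
  proof (intro exI ballI)
    fix Y assume "Y \<in> level"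
    hence "trace (C ** Y) = b \<bullet> y + trace (S ** Y)"
      by (simp add: level_def F_def dual_feasible[symmetric] matrix_add_rdistrib trace_add
          inner_opA[symmetric] inner_commute)
    hence "e * norm Y \<le> trace (C ** E) - b \<bullet> y"
      using coercive[of Y] \<open>Y \<in> level\<close> by (simp add: level_def F_def)
    thus "norm Y \<le> (trace (C ** E) - b \<bullet> y) / e" using e by (simp add: field_simps)
  qed
  moreover have "level = {Y. opA A Y = b} \<inter> KE E \<beta> \<inter> {Y. trace (C ** Y) \<le> trace (C ** E)}"
    by (auto simp: level_def F_def)
  hence "closed level"
    using continuous_on_linear[OF linear_opA] continuous_on_linear[OF linear_trace_mult]
    by (simp, intro closed_Int closed_KE closed_Collect_eq closed_Collect_le continuous_on_const) auto
  ultimately have "compact level" by (simp add: compact_eq_bounded_closed)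
  moreover have "E \<in> F" using E \<beta> E_mem_KE by (simp add: F_def)
  ultimately obtain X where "X \<in> F" "\<And>Y. Y \<in> F \<Longrightarrow> trace (C ** X) \<le> trace (C ** Y)"
    using attains_inf_of_compact_sublevel[of F "\<lambda>Y. trace (C ** Y)" E]
      continuous_on_linear[OF linear_trace_mult] unfolding level_def by blast
  thus ?thesis unfolding QP_opt_def F_def by blast
qed

section \<open>Optimality conditions for \<open>QP\<^sub>E(\<alpha>)\<close>\<close>

locale QP_optimum = whitening E L
  for E L :: "real^'n^'n" +
  fixes A :: "'m::finite \<Rightarrow> real^'n^'n" and b :: "real^'m" and C :: "real^'n^'n"
    and \<alpha> :: real and X :: "real^'n^'n"
  assumes symm_A: "\<And>i. symm (A i)" and symm_C: "symm C" and C_notin: "C \<notin> span (range A)"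
    and b_nonzero: "b \<noteq> 0" and alpha: "0 < \<alpha>" "\<alpha> < 1" and E_feasible: "opA A E = b"
    and X_opt: "QP_opt A b C E \<alpha> X"
begin

lemma X_feasible: "opA A X = b" "X \<in> KE E \<alpha>" "symm X"
  using X_opt by (auto simp: QP_opt_def KE_def)

lemma whiten_X_nonzero: "whiten X \<noteq> 0"
  using X_feasible(1) b_nonzero unwhiten_whiten[of X] opA_zero by force

lemma objective_nondecreasing:
  assumes "opA A D = 0" "X + \<epsilon> *\<^sub>R D \<in> KE E \<alpha>"
  shows "\<epsilon> * trace (C ** D) \<ge> 0"
proof -
  have "opA A (X + \<epsilon> *\<^sub>R D) = b" using assms(1) X_feasible(1) by (simp add: opA_add opA_scaleR)
  hence "trace (C ** X) \<le> trace (C ** (X + \<epsilon> *\<^sub>R D))" using X_opt assms(2) by (simp add: QP_opt_def)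
  thus ?thesis by (simp add: trace_mult_add_scaleR)
qed

lemma mem_KE_step:
  "symm D \<Longrightarrow> trace (whiten X + \<epsilon> *\<^sub>R whiten D) \<ge> \<alpha> * norm (whiten X + \<epsilon> *\<^sub>R whiten D)
    \<Longrightarrow> X + \<epsilon> *\<^sub>R D \<in> KE E \<alpha>"
  using X_feasible(3) by (simp add: mem_KE_iff whiten_add whiten_scaleR)

text \<open>If \<open>X\<close> were interior to \<open>K\<^sub>E(\<alpha>)\<close>, the objective would be stationary on the whole affine
  feasible set, forcing \<open>C\<close> into the span of the constraint matrices.\<close>

lemma X_on_boundary: "trace (whiten X) = \<alpha> * norm (whiten X)"
proof (rule ccontr)
  assume "trace (whiten X) \<noteq> \<alpha> * norm (whiten X)"
  hence gap: "trace (whiten X) > \<alpha> * norm (whiten X)" using X_feasible(2) by (simp add: mem_KE_iff)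
  have "trace (C ** D) = 0" if "symm D" "opA A D = 0" for D
  proof -
    obtain \<epsilon> where "\<epsilon> > 0"
      and plus: "trace (whiten X + \<epsilon> *\<^sub>R whiten D) \<ge> \<alpha> * norm (whiten X + \<epsilon> *\<^sub>R whiten D)"
      and minus: "trace (whiten X - \<epsilon> *\<^sub>R whiten D) \<ge> \<alpha> * norm (whiten X - \<epsilon> *\<^sub>R whiten D)"
      using cone_interior_feasible_directions[OF gap linear_trace, of "whiten D"] alpha by auto
    have "X + \<epsilon> *\<^sub>R D \<in> KE E \<alpha>" "X + (- \<epsilon>) *\<^sub>R D \<in> KE E \<alpha>"
      using mem_KE_step[OF \<open>symm D\<close> plus] mem_KE_step[OF \<open>symm D\<close>, of "- \<epsilon>"] minus by simp_all
    hence "\<epsilon> * trace (C ** D) \<ge> 0" "(- \<epsilon>) * trace (C ** D) \<ge> 0"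
      using objective_nondecreasing[OF \<open>opA A D = 0\<close>] by blast+
    thus ?thesis using \<open>\<epsilon> > 0\<close> by (simp add: mult_le_0_iff zero_le_mult_iff)
  qed
  hence "C \<in> span (range A)" by (intro mem_span_of_orthogonal_kernel symm_A symm_C)
  thus False using C_notin by simp
qed

text \<open>The normal of \<open>K\<^sub>E(\<alpha>)\<close> at \<open>X\<close> that lies in the dual cone, pulled back from
  whitened coordinates.\<close>

definition normal :: "real^'n^'n" where
  "normal = L ** (mat 1 - (\<alpha> / norm (whiten X)) *\<^sub>R whiten X) ** transpose L"

lemma whiten_dual_normal: "whiten_dual normal = mat 1 - (\<alpha> / norm (whiten X)) *\<^sub>R whiten X"
  by (simp add: normal_def whiten_dual_unwhiten)

lemma symm_normal: "symm normal"
  using X_feasible(3) by (simp add: normal_def symm_whiten symm_congruence_transpose)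

lemma trace_normal_mult:
  "symm D \<Longrightarrow> trace (normal ** D) = trace (whiten D) - (\<alpha> / norm (whiten X)) * (whiten X \<bullet> whiten D)"
  unfolding normal_def by (simp add: trace_unwhiten_mult inner_diff_left inner_mat_1_left)

lemma trace_normal_mult_X: "trace (normal ** X) = 0"
  using whiten_X_nonzero
  by (simp add: trace_normal_mult[OF X_feasible(3)] X_on_boundary power2_norm_eq_inner[symmetric]
      power2_eq_square)

lemma trace_normal_mult_E: "trace (normal ** E) = real CARD('n) - \<alpha>^2"
  using whiten_X_nonzero
  by (simp add: trace_normal_mult[OF E_symm] whiten_E trace_I trace_eq_inner_mat_1[symmetric]
      X_on_boundary power2_eq_square)

lemma trace_normal_mult_E_pos: "trace (normal ** E) > 0"
proof -
  have "\<alpha>^2 < 1" using alpha by (simp add: power_less_one_iff abs_less_iff)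
  moreover have "real CARD('n) \<ge> 1" by simp
  ultimately show ?thesis unfolding trace_normal_mult_E by linarith
qed

lemma normal_mem_dual_cone: "normal \<in> dual_cone (KE E \<alpha>)"
  unfolding dual_cone_def
proof (intro CollectI conjI ballI)
  fix Y assume "Y \<in> KE E \<alpha>"
  hence "symm Y" "trace (whiten Y) \<ge> \<alpha> * norm (whiten Y)" by (auto simp: mem_KE_iff)
  have "(\<alpha> / norm (whiten X)) * (whiten X \<bullet> whiten Y) \<le> (\<alpha> / norm (whiten X)) * (norm (whiten X) * norm (whiten Y))"
    using alpha norm_cauchy_schwarz by (intro mult_left_mono) auto
  also have "\<dots> = \<alpha> * norm (whiten Y)" using whiten_X_nonzero by simp
  finally show "trace (normal ** Y) \<ge> 0"
    using \<open>trace (whiten Y) \<ge> \<alpha> * norm (whiten Y)\<close> by (simp add: trace_normal_mult[OF \<open>symm Y\<close>])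
qed (rule symm_normal)

lemma feasible_direction:
  assumes "symm D" "trace (normal ** D) > 0"
  obtains \<epsilon> where "\<epsilon> > 0" "X + \<epsilon> *\<^sub>R D \<in> KE E \<alpha>"
proof -
  have "whiten D \<bullet> mat 1 - (\<alpha> / norm (whiten X)) * (whiten X \<bullet> whiten D) > 0"
    using assms trace_normal_mult[OF assms(1)] unfolding trace_eq_inner_mat_1[of "whiten D"] by simp
  moreover have "whiten X \<bullet> mat 1 = \<alpha> * norm (whiten X)"
    using X_on_boundary unfolding trace_eq_inner_mat_1[of "whiten X"] .
  ultimately obtain \<epsilon> where "\<epsilon> > 0"
    "(whiten X + \<epsilon> *\<^sub>R whiten D) \<bullet> mat 1 \<ge> \<alpha> * norm (whiten X + \<epsilon> *\<^sub>R whiten D)"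
    using cone_boundary_feasible_direction[of "whiten X" "mat 1" \<alpha> "whiten D"] whiten_X_nonzero alpha
    by auto
  thus ?thesis using that mem_KE_step[OF assms(1)] unfolding trace_eq_inner_mat_1 by blast
qed

lemma objective_proportional_normal:
  obtains \<mu> where "\<mu> \<ge> 0" "\<And>D. symm D \<Longrightarrow> opA A D = 0 \<Longrightarrow> trace (C ** D) = \<mu> * trace (normal ** D)"
proof -
  let ?P = "\<lambda>D. symm D \<and> opA A D = 0"
  have P: "?P (D + c *\<^sub>R (E - X))" "?P (- D)" if "?P D" for D c
    using that E_symm X_feasible E_feasible opA_scaleR[of A "-1" D]
    by (simp_all add: opA_add opA_scaleR opA_diff)
  have PE: "?P (E - X)" using E_symm X_feasible E_feasible by (simp add: opA_diff)
  have gE: "trace (normal ** (E - X)) > 0"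
    using trace_normal_mult_E_pos by (simp add: matrix_diff_ldistrib trace_sub trace_normal_mult_X)
  have nonneg: "trace (C ** D) \<ge> 0" if D: "?P D" "trace (normal ** D) > 0" for D
  proof -
    obtain \<epsilon> where "\<epsilon> > 0" "X + \<epsilon> *\<^sub>R D \<in> KE E \<alpha>" using feasible_direction D by blast
    hence "0 \<le> \<epsilon> * trace (C ** D)" using objective_nondecreasing D by blast
    thus ?thesis using \<open>\<epsilon> > 0\<close> by (simp add: zero_le_mult_iff)
  qed
  define \<mu> where "\<mu> = trace (C ** (E - X)) / trace (normal ** (E - X))"
  have "0 \<le> trace (C ** (E - X))"
    by (rule linear_proportional_of_pos_imp_nonneg(1)[where P = ?P and g = "\<lambda>D. trace (normal ** D)"])
      (assumption | rule P PE gE nonneg linear_trace_mult)+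
  hence "\<mu> \<ge> 0" using gE unfolding \<mu>_def by (rule divide_nonneg_pos)
  moreover have "trace (C ** D) = \<mu> * trace (normal ** D)" if "?P D" for D
    unfolding \<mu>_def
    by (rule linear_proportional_of_pos_imp_nonneg(2)[where P = ?P])
      (assumption | rule P PE gE nonneg linear_trace_mult that)+
  ultimately show ?thesis using that by blast
qed

lemma complementary_slackness:
  assumes S_opt: "QPdual_opt A b C E \<alpha> y S"
  shows "trace (S ** X) = 0"
proof -
  obtain \<mu> where \<mu>: "\<mu> \<ge> 0" "\<And>D. symm D \<Longrightarrow> opA A D = 0 \<Longrightarrow> trace (C ** D) = \<mu> * trace (normal ** D)"
    using objective_proportional_normal by blast
  have "C - \<mu> *\<^sub>R normal \<in> span (range A)"
    using symm_C symm_normal \<mu>(2)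
    by (intro mem_span_of_orthogonal_kernel symm_A)
      (simp_all add: matrix_diff_rdistrib trace_sub trace_scaleR_mult)
  then obtain y' where y': "opAadj A y' = C - \<mu> *\<^sub>R normal"
    by (auto simp: span_range_eq_range_opAadj)
  have "\<mu> *\<^sub>R normal \<in> dual_cone (KE E \<alpha>)"
    using normal_mem_dual_cone \<mu>(1) symm_normal by (simp add: dual_cone_def trace_scaleR_mult)
  hence "b \<bullet> y' \<le> b \<bullet> y" using S_opt y' by (simp add: QPdual_opt_def)
  moreover have "b \<bullet> y' = trace (C ** X)"
    using inner_opA[of y' A X] X_feasible(1)
    by (simp add: y' inner_commute matrix_diff_rdistrib trace_sub trace_scaleR_mult trace_normal_mult_X)
  moreover have "b \<bullet> y = trace (C ** X) - trace (S ** X)"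
    using inner_opA[of y A X] X_feasible(1) S_opt
    by (simp add: QPdual_opt_def inner_commute eq_diff_eq[symmetric] matrix_diff_rdistrib trace_sub)
  moreover have "trace (S ** X) \<ge> 0"
    using S_opt X_feasible(2) by (simp add: QPdual_opt_def dual_cone_def)
  ultimately show ?thesis by linarith
qed

lemma dual_slack_proportional_normal:
  assumes S_opt: "QPdual_opt A b C E \<alpha> y S"
  obtains \<mu> where "\<mu> \<ge> 0" "\<And>D. symm D \<Longrightarrow> trace (S ** D) = \<mu> * trace (normal ** D)"
proof -
  have P: "symm (D + c *\<^sub>R E)" "symm (- D)" if "symm D" for D :: "real^'n^'n" and c
    using that E_symm by simp_all
  have nonneg: "trace (S ** D) \<ge> 0" if D: "symm D" "trace (normal ** D) > 0" for D
  proof -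
    obtain \<epsilon> where "\<epsilon> > 0" "X + \<epsilon> *\<^sub>R D \<in> KE E \<alpha>" using feasible_direction D by blast
    hence "0 \<le> trace (S ** (X + \<epsilon> *\<^sub>R D))" using S_opt by (simp add: QPdual_opt_def dual_cone_def)
    hence "0 \<le> \<epsilon> * trace (S ** D)" by (simp add: trace_mult_add_scaleR complementary_slackness[OF S_opt])
    thus ?thesis using \<open>\<epsilon> > 0\<close> by (simp add: zero_le_mult_iff)
  qed
  define \<mu> where "\<mu> = trace (S ** E) / trace (normal ** E)"
  have "0 \<le> trace (S ** E)"
    by (rule linear_proportional_of_pos_imp_nonneg(1)[where P = symm and g = "\<lambda>D. trace (normal ** D)"])
      (assumption | rule P E_symm trace_normal_mult_E_pos nonneg linear_trace_mult)+
  hence "\<mu> \<ge> 0" using trace_normal_mult_E_pos unfolding \<mu>_def by (rule divide_nonneg_pos)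
  moreover have "trace (S ** D) = \<mu> * trace (normal ** D)" if "symm D" for D
    unfolding \<mu>_def
    by (rule linear_proportional_of_pos_imp_nonneg(2)[where P = symm])
      (assumption | rule P E_symm trace_normal_mult_E_pos nonneg linear_trace_mult that)+
  ultimately show ?thesis using that by blast
qed

text \<open>The multiple is nonzero because \<open>C\<close> is not in the span of the \<open>A\<^sub>i\<close>.\<close>

lemma dual_slack_eq_normal:
  assumes S_opt: "QPdual_opt A b C E \<alpha> y S"
  obtains \<mu> where "\<mu> > 0" "S = \<mu> *\<^sub>R normal"
proof -
  obtain \<mu> where \<mu>: "\<mu> \<ge> 0" "\<And>D. symm D \<Longrightarrow> trace (S ** D) = \<mu> * trace (normal ** D)"
    using dual_slack_proportional_normal[OF S_opt] by blast
  have "symm S" using S_opt by (simp add: QPdual_opt_def dual_cone_def)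
  hence symm_diff: "symm (S - \<mu> *\<^sub>R normal)" using symm_normal by simp
  hence "trace ((S - \<mu> *\<^sub>R normal) ** (S - \<mu> *\<^sub>R normal)) = 0"
    by (simp add: matrix_diff_rdistrib trace_sub trace_scaleR_mult \<mu>(2))
  hence S_eq: "S = \<mu> *\<^sub>R normal" using trace_mult_symm_eq_inner[OF symm_diff] by simp
  have "\<mu> \<noteq> 0"
  proof
    assume "\<mu> = 0"
    hence "C = opAadj A y" using S_opt S_eq by (simp add: QPdual_opt_def)
    thus False using C_notin span_range_eq_range_opAadj by blast
  qed
  thus ?thesis using \<mu>(1) S_eq by (intro that[of \<mu>]) auto
qed

end

section \<open>The step along the primal optimum\<close>

lemma strict_convex_on_quadratic:
  fixes a b c :: real
  assumes "a > 0"
  shows "strict_convex_on UNIV (\<lambda>t. a * t^2 + b * t + c)"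
  unfolding strict_convex_on_def
proof (intro conjI ballI allI impI)
  fix x y u v :: real
  assume "x \<noteq> y" "u > 0" "v > 0" "u + v = 1"
  hence v: "v = 1 - u" by simp
  have "u * (a * x^2 + b * x + c) + v * (a * y^2 + b * y + c) - (a * (u * x + v * y)^2 + b * (u * x + v * y) + c)
      = a * (u * v) * (x - y)^2"
    unfolding v by (simp add: power2_eq_square algebra_simps)
  also have "\<dots> > 0" using assms \<open>x \<noteq> y\<close> \<open>u > 0\<close> \<open>v > 0\<close> by simp
  finally show "a * (u * x + v * y)^2 + b * (u * x + v * y) + c < u * (a * x^2 + b * x + c) + v * (a * y^2 + b * y + c)"
    by simp
qed simp

lemma quadratic_minimiser_iff:
  fixes a b c :: real
  assumes "a > 0"
  shows "(\<forall>t. a * t0^2 + b * t0 + c \<le> a * t^2 + b * t + c) \<longleftrightarrow> t0 = - b / (2 * a)"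
proof -
  have diff: "a * t^2 + b * t + c - (a * s^2 + b * s + c) = a * (t - s)^2" if "s = - b / (2 * a)" for s t
  proof -
    have "b = - 2 * a * s" using assms that by (simp add: field_simps)
    thus ?thesis by (simp add: power2_eq_square algebra_simps)
  qed
  show ?thesis
  proof
    assume "\<forall>t. a * t0^2 + b * t0 + c \<le> a * t^2 + b * t + c"
    hence "a * t0^2 + b * t0 + c \<le> a * (- b / (2 * a))^2 + b * (- b / (2 * a)) + c" by blast
    hence "a * (t0 - (- b / (2 * a)))^2 \<le> 0" using diff[OF refl, of t0] by linarith
    thus "t0 = - b / (2 * a)" using assms by (simp add: mult_le_0_iff)
  next
    assume "t0 = - b / (2 * a)"
    thus "\<forall>t. a * t0^2 + b * t0 + c \<le> a * t^2 + b * t + c"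
      using diff assms by (metis diff_ge_0_iff_ge zero_le_mult_iff zero_le_power2 less_imp_le)
  qed
qed

context QP_optimum
begin

definition direction :: "real^'n^'n" where
  "direction = (1 / norm (whiten X)) *\<^sub>R whiten X"

lemma unit_direction_direction: "unit_direction direction \<alpha>"
proof
  have "norm (whiten X) > 0" using whiten_X_nonzero by simp
  thus "symm direction" "direction \<bullet> direction = 1" "direction \<bullet> mat 1 = \<alpha>"
    using X_on_boundary symm_whiten[OF X_feasible(3)]
    by (simp_all add: direction_def power2_norm_eq_inner[symmetric] power2_eq_square
        trace_eq_inner_mat_1[symmetric] trace_scaleR)
qed (use alpha in auto)

sublocale dir: unit_direction direction \<alpha>
  by (rule unit_direction_direction)

lemma whiten_step: "whiten (E + t *\<^sub>R X) = mat 1 + (t * norm (whiten X)) *\<^sub>R direction"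
  using whiten_X_nonzero by (simp add: whiten_add whiten_scaleR whiten_E direction_def)

lemma whiten_dual_slack:
  assumes "QPdual_opt A b C E \<alpha> y S"
  obtains \<mu> where "\<mu> > 0" "whiten_dual S = \<mu> *\<^sub>R (mat 1 - \<alpha> *\<^sub>R direction)"
proof -
  obtain \<mu> where "\<mu> > 0" "S = \<mu> *\<^sub>R normal" using dual_slack_eq_normal[OF assms] .
  moreover have "(\<alpha> / norm (whiten X)) *\<^sub>R whiten X = \<alpha> *\<^sub>R direction"
    by (simp add: direction_def)
  ultimately show ?thesis
    by (intro that[of \<mu>]) (simp_all add: whiten_dual_scaleR whiten_dual_normal)
qed

lemma step_mult_slack:
  assumes "whiten_dual S = \<mu> *\<^sub>R (mat 1 - \<alpha> *\<^sub>R direction)"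
  shows "whiten (E + t *\<^sub>R X) ** whiten_dual S = \<mu> *\<^sub>R dir.N (t * norm (whiten X))"
  by (simp add: assms whiten_step matrix_scalar_ac scalar_matrix_assoc[symmetric] dir.N_eq_product)

lemma trace_step_mult:
  assumes "whiten_dual S = \<mu> *\<^sub>R (mat 1 - \<alpha> *\<^sub>R direction)"
  shows "trace ((E + t *\<^sub>R X) ** S) = \<mu> * (real CARD('n) - \<alpha>^2)"
  using trace_whiten_mult_whiten_dual[of "E + t *\<^sub>R X" S]
  by (simp add: step_mult_slack[OF assms] trace_scaleR dir.trace_N)

lemma trace_square_step_mult:
  assumes "whiten_dual S = \<mu> *\<^sub>R (mat 1 - \<alpha> *\<^sub>R direction)"
  shows "trace (((E + t *\<^sub>R X) ** S) ** ((E + t *\<^sub>R X) ** S))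
    = \<mu>^2 * (dir.N (t * norm (whiten X)) \<bullet> dir.N (t * norm (whiten X)))"
  using trace_square_whiten_mult_whiten_dual[of "E + t *\<^sub>R X" S]
  by (simp add: step_mult_slack[OF assms] matrix_scalar_ac trace_scaleR_mult[symmetric]
      trace_mult_symm_eq_inner dir.symm_N scalar_matrix_assoc[symmetric] trace_scaleR power2_eq_square)


lemma step_objective_quadratic:
  assumes "QPdual_opt A b C E \<alpha> y S"
  obtains a b' c where "a > 0" "- b' / (2 * a) = dir.vertex / norm (whiten X)"
    "\<And>t. trace (((E + t *\<^sub>R X) ** S) ** ((E + t *\<^sub>R X) ** S)) = a * t^2 + b' * t + c"
proof -
  obtain \<mu> where \<mu>: "\<mu> > 0" "whiten_dual S = \<mu> *\<^sub>R (mat 1 - \<alpha> *\<^sub>R direction)"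
    using whiten_dual_slack[OF assms] .
  define \<nu> where "\<nu> = norm (whiten X)"
  have "\<nu> > 0" using whiten_X_nonzero by (simp add: \<nu>_def)
  show ?thesis
  proof (rule that[of "\<mu>^2 * dir.quad_coeff * \<nu>^2" "- 2 * \<mu>^2 * dir.lin_coeff * \<nu>"
        "\<mu>^2 * (real CARD('n) - \<alpha>^2)"])
    show "\<mu>^2 * dir.quad_coeff * \<nu>^2 > 0" using \<mu>(1) \<open>\<nu> > 0\<close> dir.quad_coeff_pos by simp
    show "- (- 2 * \<mu>^2 * dir.lin_coeff * \<nu>) / (2 * (\<mu>^2 * dir.quad_coeff * \<nu>^2)) = dir.vertex / norm (whiten X)"
      using \<mu>(1) \<open>\<nu> > 0\<close> dir.quad_coeff_pos
      by (simp add: \<nu>_def dir.vertex_def field_simps power2_eq_square)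
  qed (simp add: trace_square_step_mult[OF \<mu>(2)] dir.inner_N_self \<nu>_def power_mult_distrib algebra_simps)
qed

definition step_length :: real where
  "step_length = dir.vertex / norm (whiten X)"

definition step_radius :: real where
  "step_radius = step_length - (1/2) * \<alpha> / norm (whiten X)"

lemma step_radius_pos: "step_radius > 0"
proof -
  have "step_radius = (dir.vertex - \<alpha> / 2) / norm (whiten X)"
    by (simp add: step_radius_def step_length_def diff_divide_distrib)
  thus ?thesis using dir.half_alpha_lt_vertex whiten_X_nonzero by simp
qed

lemma step_near_vertex:
  assumes "\<bar>t - step_length\<bar> \<le> step_radius"
  shows "\<bar>t * norm (whiten X) - dir.vertex\<bar> \<le> dir.vertex - \<alpha> / 2"
proof -
  have \<nu>: "norm (whiten X) > 0" using whiten_X_nonzero by simp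
  have "(t - step_length) * norm (whiten X) = t * norm (whiten X) - dir.vertex"
    using \<nu> by (simp add: step_length_def left_diff_distrib)
  hence "\<bar>t * norm (whiten X) - dir.vertex\<bar> = \<bar>t - step_length\<bar> * norm (whiten X)"
    using \<nu> by (metis abs_mult abs_of_pos)
  also have "\<dots> \<le> step_radius * norm (whiten X)" using assms \<nu> by (simp add: mult_right_mono)
  also have "\<dots> = dir.vertex - \<alpha> / 2"
    using \<nu> by (simp add: step_radius_def step_length_def left_diff_distrib)
  finally show ?thesis .
qed

lemma step_pos: "\<bar>t - step_length\<bar> \<le> step_radius \<Longrightarrow> t > 0"
  using step_near_vertex alpha whiten_X_nonzero
  by (fastforce simp: abs_le_iff zero_less_mult_iff dest: order.strict_trans2[rotated])

lemma posdef_step: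
  assumes "\<bar>t - step_length\<bar> \<le> step_radius"
  shows "posdef ((1 / (1 + t)) *\<^sub>R (E + t *\<^sub>R X))"
proof (rule posdef_scaleR)
  show "1 / (1 + t) > 0" using step_pos[OF assms] by simp
  show "posdef (E + t *\<^sub>R X)"
  proof (rule posdef_unwhiten)
    show "symm (E + t *\<^sub>R X)" using E_symm X_feasible(3) by simp
    show "posdef (whiten (E + t *\<^sub>R X))"
      using dir.posdef_shift[OF step_near_vertex[OF assms]] by (simp add: whiten_step)
  qed
qed

text \<open>Near the vertex \<open>\<parallel>N s\<parallel>\<close> is small enough for the old dual slack to lie strictly inside the
  dual cone of \<open>K\<^sub>E\<^sub>(\<^sub>t\<^sub>)(\<beta>)\<close>; the positive factor \<open>\<mu>/(1+t)\<close> cancels from the criterion.\<close>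

lemma trace_bound_step:
  assumes S_opt: "QPdual_opt A b C E \<alpha> y S" and t: "\<bar>t - step_length\<bar> \<le> step_radius"
  defines "Et \<equiv> (1 / (1 + t)) *\<^sub>R (E + t *\<^sub>R X)"
  shows "sqrt (real CARD('n) - dir.next_alpha^2) * sqrt (trace ((Et ** S) ** (Et ** S))) < trace (Et ** S)"
proof -
  define \<nu> n where "\<nu> = norm (whiten X)" and "n = real CARD('n)"
  obtain \<mu> where \<mu>: "\<mu> > 0" "whiten_dual S = \<mu> *\<^sub>R (mat 1 - \<alpha> *\<^sub>R direction)"
    using whiten_dual_slack[OF S_opt] .
  define k where "k = \<mu> / (1 + t)"
  have "k > 0" using \<mu>(1) step_pos[OF t] by (simp add: k_def)
  have "(n - dir.next_alpha^2) * (dir.N (t * \<nu>) \<bullet> dir.N (t * \<nu>)) < (n - \<alpha>^2)^2"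
    using dir.inner_N_self_bound[OF step_near_vertex[OF t]] by (simp add: n_def \<nu>_def)
  hence "sqrt ((n - dir.next_alpha^2) * (dir.N (t * \<nu>) \<bullet> dir.N (t * \<nu>))) < sqrt ((n - \<alpha>^2)^2)"
    by (rule real_sqrt_less_mono)
  moreover have "n - \<alpha>^2 > 0" using dir.alpha_square_lt_card by (simp add: n_def)
  ultimately have "sqrt (n - dir.next_alpha^2) * sqrt (dir.N (t * \<nu>) \<bullet> dir.N (t * \<nu>)) < n - \<alpha>^2"
    by (simp add: real_sqrt_mult)
  moreover have "trace (Et ** S) = k * (n - \<alpha>^2)"
    by (simp add: Et_def k_def n_def trace_scaleR_mult trace_step_mult[OF \<mu>(2)])
  moreover have "trace ((Et ** S) ** (Et ** S)) = k^2 * (dir.N (t * \<nu>) \<bullet> dir.N (t * \<nu>))"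
    by (simp add: Et_def k_def \<nu>_def trace_square_step_mult[OF \<mu>(2)] scalar_matrix_assoc[symmetric]
        matrix_scalar_ac trace_scaleR power_divide power2_eq_square)
  ultimately show ?thesis
    using \<open>k > 0\<close> by (simp add: n_def real_sqrt_mult mult.left_commute[of _ k])
qed

lemma swath_step:
  assumes S_opt: "QPdual_opt A b C E \<alpha> y S" and t: "\<bar>t - step_length\<bar> \<le> step_radius"
  defines "Et \<equiv> (1 / (1 + t)) *\<^sub>R (E + t *\<^sub>R X)"
  shows "S \<in> int_sym (dual_cone (KE Et dir.next_alpha))" "Et \<in> Swath A b C dir.next_alpha"
proof -
  have "opA A (E + t *\<^sub>R X) = (1 + t) *\<^sub>R b"
    using E_feasible X_feasible(1) by (simp add: opA_add opA_scaleR scaleR_add_left)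
  hence feasible: "opA A Et = b" using step_pos[OF t] by (simp add: Et_def opA_scaleR)
  have "dir.next_alpha^2 \<le> 1"
    using dir.next_alpha_le_1 dir.next_alpha_nonneg by (simp add: power_le_one)
  hence "dir.next_alpha^2 \<le> real CARD('n)" by (simp add: order_trans[of _ 1])
  moreover have "symm S" using S_opt by (simp add: QPdual_opt_def dual_cone_def)
  ultimately show int: "S \<in> int_sym (dual_cone (KE Et dir.next_alpha))"
    using posdef_step[OF t] trace_bound_step[OF S_opt t] dir.next_alpha_nonneg
    unfolding Et_def by (intro int_dual_cone_KE)
  have "\<exists>X'. QP_opt A b C Et dir.next_alpha X'"
    using S_opt int posdef_step[OF t] feasible dir.next_alpha_nonneg dir.next_alpha_le_1
    by (intro QP_opt_exists[where y = y]) (simp_all add: Et_def QPdual_opt_def)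
  thus "Et \<in> Swath A b C dir.next_alpha" using posdef_step[OF t] feasible by (simp add: Et_def Swath_def)
qed

end

lemma QP_optimum_of_Swath:
  assumes "\<And>i. symm (A i)" "symm C" "C \<notin> span (range A)" "b \<noteq> 0" "0 < \<alpha>" "\<alpha> < 1"
    and "E \<in> Swath A b C \<alpha>" "QP_opt A b C E \<alpha> X"
  obtains L where "QP_optimum E L A b C \<alpha> X"
proof -
  obtain L where "whitening E L" using posdef_whitening assms(7) by (auto simp: Swath_def)
  thus ?thesis using assms that by (simp add: QP_optimum_def QP_optimum_axioms_def Swath_def)
qed

theorem corollary4p2:
  fixes A :: "'m::finite \<Rightarrow> real^'n^'n" and b :: "real^'m" and C :: "real^'n^'n"
    and \<alpha> :: real and E X\<^sub>E S\<^sub>E :: "real^'n^'n" and y\<^sub>E :: "real^'m"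
  assumes symA: "\<And>i. symm (A i)" and symC: "symm C"
    and primal_strict: "\<exists>X. posdef X \<and> opA A X = b"
    and dual_strict: "\<exists>y S. posdef S \<and> opAadj A y + S = C"
    and b_nz: "b \<noteq> 0"
    and C_notin: "C \<notin> span (range A)"
    and A_indep: "\<And>c :: 'm \<Rightarrow> real. (\<Sum>i\<in>UNIV. c i *\<^sub>R A i) = 0 \<Longrightarrow> (\<forall>i. c i = 0)"
    and alpha: "0 < \<alpha>" "\<alpha> < 1"
    and E_swath: "E \<in> Swath A b C \<alpha>"
    and X_opt: "QP_opt A b C E \<alpha> X\<^sub>E"
    and S_opt: "QPdual_opt A b C E \<alpha> y\<^sub>E S\<^sub>E"
  shows "strict_convex_on UNIV (\<lambda>t. trace (((E + t *\<^sub>R X\<^sub>E) ** S\<^sub>E) ** ((E + t *\<^sub>R X\<^sub>E) ** S\<^sub>E)))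
    \<and> (\<exists>t\<^sub>E. \<forall>t. trace (((E + t\<^sub>E *\<^sub>R X\<^sub>E) ** S\<^sub>E) ** ((E + t\<^sub>E *\<^sub>R X\<^sub>E) ** S\<^sub>E))
                 \<le> trace (((E + t *\<^sub>R X\<^sub>E) ** S\<^sub>E) ** ((E + t *\<^sub>R X\<^sub>E) ** S\<^sub>E)))
    \<and> (\<forall>t\<^sub>E. (\<forall>t. trace (((E + t\<^sub>E *\<^sub>R X\<^sub>E) ** S\<^sub>E) ** ((E + t\<^sub>E *\<^sub>R X\<^sub>E) ** S\<^sub>E))
                 \<le> trace (((E + t *\<^sub>R X\<^sub>E) ** S\<^sub>E) ** ((E + t *\<^sub>R X\<^sub>E) ** S\<^sub>E))) \<longrightarrow>
        (let \<delta> = t\<^sub>E - (1/2) * \<alpha> / normE E X\<^sub>E;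
             \<beta> = \<alpha> * sqrt ((1 + \<alpha>) / 2)
         in \<delta> > 0 \<and>
            (\<forall>t. t\<^sub>E - \<delta> \<le> t \<and> t \<le> t\<^sub>E + \<delta> \<longrightarrow>
               (let Et = (1 / (1 + t)) *\<^sub>R (E + t *\<^sub>R X\<^sub>E)
                in Et \<in> Swath A b C \<beta> \<and> S\<^sub>E \<in> int_sym (dual_cone (KE Et \<beta>))))))"
proof -
  obtain L where "QP_optimum E L A b C \<alpha> X\<^sub>E"
    using QP_optimum_of_Swath[OF symA symC C_notin b_nz alpha E_swath X_opt] .
  then interpret QP_optimum E L A b C \<alpha> X\<^sub>E .
  obtain a b' c where a: "a > 0" and vertex: "- b' / (2 * a) = step_length"
    and quadratic: "\<And>t. trace (((E + t *\<^sub>R X\<^sub>E) ** S\<^sub>E) ** ((E + t *\<^sub>R X\<^sub>E) ** S\<^sub>E)) = a * t^2 + b' * t + c"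
    using step_objective_quadratic[OF S_opt] unfolding step_length_def[symmetric] by blast
  have minimiser: "(\<forall>t. a * t0^2 + b' * t0 + c \<le> a * t^2 + b' * t + c) \<longleftrightarrow> t0 = step_length" for t0
    using quadratic_minimiser_iff[OF a, of t0 b' c] vertex by simp
  show ?thesis
    unfolding quadratic normE_eq_norm_whiten[OF X_feasible(3)] Let_def dir.next_alpha_def[symmetric]
  proof (intro conjI strict_convex_on_quadratic[OF a] exI[of _ step_length] allI impI)
    fix t\<^sub>E t assume "\<forall>t. a * t\<^sub>E^2 + b' * t\<^sub>E + c \<le> a * t^2 + b' * t + c"
    hence t\<^sub>E: "t\<^sub>E = step_length" using minimiser by blast
    thus "t\<^sub>E - 1 / 2 * \<alpha> / norm (whiten X\<^sub>E) > 0" using step_radius_pos by (simp add: step_radius_def)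
    assume "t\<^sub>E - (t\<^sub>E - 1 / 2 * \<alpha> / norm (whiten X\<^sub>E)) \<le> t \<and> t \<le> t\<^sub>E + (t\<^sub>E - 1 / 2 * \<alpha> / norm (whiten X\<^sub>E))"
    hence "\<bar>t - step_length\<bar> \<le> step_radius" using t\<^sub>E by (simp add: step_radius_def abs_le_iff)
    from swath_step[OF S_opt this]
    show "(1 / (1 + t)) *\<^sub>R (E + t *\<^sub>R X\<^sub>E) \<in> Swath A b C dir.next_alpha"
      and "S\<^sub>E \<in> int_sym (dual_cone (KE ((1 / (1 + t)) *\<^sub>R (E + t *\<^sub>R X\<^sub>E)) dir.next_alpha))" by simp_all
  qed (use minimiser in blast)
qed

end
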